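(* Let $q,r\ge0$, let $m\in\mathcal{M}$ be non-zero, and let $a,b\ge0$, $M\in\mathcal{M}$ be the unique triple with $$q+\frac r\lambda+\int\frac{m(du)}{\lambda+u}=\frac{1}{a\lambda+b+\int\frac{\lambda}{\lambda+u}M(du)},\qquad\lambda>0.$$ Define $$s_-=\sup\Big\{s<\inf\mathcal{S}(m):\ s\Big(q+\int\frac{m(du)}{u-s}\Big)<r\Big\},\qquad s_+=\inf\Big\{s>\sup\mathcal{S}(m):\ s\Big(q-\int\frac{m(du)}{s-u}\Big)>r\Big\}.$$ Then: (i) If $a=0=b$, then $\frac{r}{r+\overline m_0+q\inf\mathcal{S}(m)}\inf\mathcal{S}(m)\le s_-\le\inf\mathcal{S}(M)$ and $\sup\mathcal{S}(M)\le s_+$, where $s_+\le\sup\mathcal{S}(m)+(r+\overline m_0)q^{-1}$ if $q>0$ and $s_+=\infty$ if $q=0$. (ii) If $a>0$ and $b=0$, then $\frac{r}{r+\overline m_0}\inf\mathcal{S}(m)\le s_-\le\inf\mathcal{S}(M)\le\sup\mathcal{S}(M)\le\sup\mathcal{S}(m)$. (iii) If $a=0$ and $b>0$, then $\inf\mathcal{S}(m)\le\inf\mathcal{S}(M)\le\sup\mathcal{S}(M)\le s_+$, where $s_+\le\sup\mathcal{S}(m)+\overline m_0q^{-1}$ if $q>0$ and $s_+=\infty$ if $q=0$. (iv) If $a,b>0$, then $\mathcal{S}(M)\subset[\inf\mathcal{S}(m),\sup\mathcal{S}(m)]$.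
   Context: $\mathcal{M}$ is the set of measures $m$ on $(0,\infty)$ with $\int(1+u)^{-1}m(du)<\infty$; $\overline m_\alpha=\int u^\alpha m(du)$; $\mathcal{S}(m)$ denotes the support of $m$, with $\mathcal{S}(M)=\emptyset$ when $M\equiv0$. Convention $1/\infty=0$, $\inf\emptyset=\infty$. *)

theory Defs
  imports "HOL-Analysis.Analysis"
begin

text \<open>The class \<M>: measures on (0,\<infinity>), represented as Borel measures on the real
line that give no mass to (-\<infinity>,0], with \<integral>(1+u)^{-1} m(du) < \<infinity>.\<close>
definition Mclass :: "real measure set" where
  "Mclass = {m. sets m = sets borel \<and> emeasure m {..0} = 0 \<and>
                (\<integral>\<^sup>+ u. ennreal (1 / (1 + u)) \<partial>m) < \<infinity>}"

definition supp :: "real measure \<Rightarrow> real set" where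
  "supp m = {x. 0 < x \<and> (\<forall>e>0. 0 < emeasure m {x - e <..< x + e})}"

text \<open>inf and sup of the support, in the extended reals (inf of empty set = \<infinity>).\<close>
definition infS :: "real measure \<Rightarrow> ereal" where
  "infS m = Inf (ereal ` supp m)"

definition supS :: "real measure \<Rightarrow> ereal" where
  "supS m = Sup (ereal ` supp m)"

definition mbar0 :: "real measure \<Rightarrow> ereal" where
  "mbar0 m = enn2ereal (emeasure m (space m))"

definition s_minus :: "real \<Rightarrow> real \<Rightarrow> real measure \<Rightarrow> ereal" where
  "s_minus q r m = Sup (ereal ` {s. ereal s < infS m \<and>
        s * (q + (\<integral>u. 1 / (u - s) \<partial>m)) < r})"

definition s_plus :: "real \<Rightarrow> real \<Rightarrow> real measure \<Rightarrow> ereal" where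
  "s_plus q r m = Inf (ereal ` {s. supS m < ereal s \<and>
        s * (q - (\<integral>u. 1 / (s - u) \<partial>m)) > r})"

end

theory Submission
  imports Defs "HOL-Complex_Analysis.Complex_Analysis"
begin

text \<open>
  If \<open>x \<mapsto> \<integral> \<gamma>(u) / (x + \<beta>(u)) \<mu>(du)\<close> with \<open>\<beta>, \<gamma> \<ge> 0\<close> extends holomorphically from the half line
  to the disc of radius \<open>R\<close> about \<open>x0\<close>, its Taylor coefficients at \<open>x0\<close> (up to sign the moments
  \<open>\<integral> \<gamma> / (x0 + \<beta>)\<^sup>n\<^sup>+\<^sup>1\<close>) times \<open>\<rho>\<^sup>n\<close> tend to \<open>0\<close> for \<open>\<rho> < R\<close>, so \<open>\<gamma>\<close> vanishes where \<open>x0 + \<beta> \<le> \<rho>\<close>.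
  The representation writes \<open>a x + b + \<integral> x / (x + u) M(du)\<close>, and after \<open>u \<mapsto> 1 / u\<close> also
  \<open>a + b w + \<integral> w / (1 + w u) M(du)\<close>, as a reciprocal of an expression in the transform of \<open>m\<close>.
  That expression has no zeros on suitable discs about \<open>1\<close>: off the real axis because the
  transform maps each half plane into the opposite one, on it by positivity, which on the discs
  reaching \<open>s\<^sub>-\<close> and \<open>1 / s\<^sub>+\<close> is the defining inequality of \<open>s\<^sub>\<plusminus>\<close>. Holomorphy of the reciprocal
  then confines the support of \<open>M\<close>. The explicit bounds on \<open>s\<^sub>\<plusminus>\<close> follow from
  \<open>\<integral> 1 / (u - s) m(du) \<le> m\<^sub>0 / (inf S(m) - s)\<close>.
\<close>

section \<open>Generalised Stieltjes transforms\<close>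

definition stieltjes_transform :: "real measure \<Rightarrow> (real \<Rightarrow> real) \<Rightarrow> (real \<Rightarrow> real) \<Rightarrow> complex \<Rightarrow> complex"
  where "stieltjes_transform \<mu> \<beta> \<gamma> z = (\<integral>u. of_real (\<gamma> u) / (of_real (\<beta> u) + z) \<partial>\<mu>)"

definition stieltjes_fps :: "real measure \<Rightarrow> (real \<Rightarrow> real) \<Rightarrow> (real \<Rightarrow> real) \<Rightarrow> real \<Rightarrow> complex fps"
  where "stieltjes_fps \<mu> \<beta> \<gamma> x0 =
    Abs_fps (\<lambda>n. of_real ((-1) ^ n * (\<integral>u. \<gamma> u / (x0 + \<beta> u) ^ Suc n \<partial>\<mu>)))"

lemma geometric_sums_inverse:
  fixes z :: complex and c g :: real
  assumes c: "0 < c" "norm z < c"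
  shows "(\<lambda>n. of_real (g / c ^ Suc n) * (- z) ^ n) sums (of_real g / (of_real c + z))"
proof -
  have "norm (- z / of_real c) < 1"
    using c by (simp add: norm_divide)
  then have geometric: "(\<lambda>n. of_real (g / c) * (- z / of_real c) ^ n) sums
      (of_real (g / c) * (1 / (1 - - z / of_real c)))"
    by (intro sums_mult geometric_sums)
  have terms: "(\<lambda>n. of_real (g / c ^ Suc n) * (- z) ^ n) = (\<lambda>n. of_real (g / c) * (- z / of_real c) ^ n)"
    using c by (simp add: fun_eq_iff power_divide power_minus[of z] power_minus[of "z / _"] field_simps)
  have "of_real c + z \<noteq> 0"
    using c by (metis add_eq_0_iff norm_minus_cancel norm_of_real abs_of_pos less_irrefl)
  then have "of_real (g / c) * (1 / (1 - - z / of_real c)) = of_real g / (of_real c + z)"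
    using c(1) by (simp add: field_simps)
  then show ?thesis
    using geometric by (simp only: terms)
qed

lemma truncated_weight_le:
  fixes g c \<rho> :: real
  assumes "0 \<le> g" "0 < c" "c \<le> \<rho>"
  shows "g / \<rho> \<le> g / c ^ Suc n * \<rho> ^ n"
proof -
  have "g / \<rho> \<le> g / c"
    using assms by (intro divide_left_mono) auto
  also have "\<dots> \<le> g / c * (\<rho> / c) ^ n"
    using assms one_le_power[of "\<rho> / c" n] mult_left_mono[of 1 "(\<rho> / c) ^ n" "g / c"] by simp
  also have "\<dots> = g / c ^ Suc n * \<rho> ^ n"
    by (simp add: power_divide)
  finally show ?thesis .
qed

context
  fixes \<mu> :: "real measure" and \<beta> \<gamma> :: "real \<Rightarrow> real" and x0 \<sigma> :: real
  assumes \<beta>_measurable [measurable]: "\<beta> \<in> borel_measurable \<mu>"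
    and \<gamma>_measurable [measurable]: "\<gamma> \<in> borel_measurable \<mu>"
    and AE_\<beta>_ge: "AE u in \<mu>. \<sigma> \<le> \<beta> u" and AE_\<gamma>_nonneg: "AE u in \<mu>. 0 \<le> \<gamma> u"
    and centre_pos: "0 < x0 + \<sigma>"
    and integrable_at_centre: "integrable \<mu> (\<lambda>u. \<gamma> u / (x0 + \<beta> u))"
begin

lemma AE_stieltjes_power_bounds:
  "AE u in \<mu>. 0 \<le> \<gamma> u / (x0 + \<beta> u) ^ Suc n \<and>
     \<gamma> u / (x0 + \<beta> u) ^ Suc n \<le> (1 / (x0 + \<sigma>)) ^ n * (\<gamma> u / (x0 + \<beta> u))"
  using AE_\<beta>_ge AE_\<gamma>_nonneg
proof eventually_elim
  case (elim u)
  have le: "x0 + \<sigma> \<le> x0 + \<beta> u" and pos: "0 < x0 + \<beta> u"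
    using elim centre_pos by auto
  have "\<gamma> u / (x0 + \<beta> u) ^ Suc n = (\<gamma> u / (x0 + \<beta> u)) / (x0 + \<beta> u) ^ n"
    by simp
  also have "\<dots> \<le> (\<gamma> u / (x0 + \<beta> u)) / (x0 + \<sigma>) ^ n"
    using le pos elim centre_pos by (intro divide_left_mono power_mono) auto
  also have "\<dots> = (1 / (x0 + \<sigma>)) ^ n * (\<gamma> u / (x0 + \<beta> u))"
    by (simp add: power_divide)
  finally show ?case
    using elim pos by (auto intro: divide_nonneg_pos)
qed

lemma integrable_stieltjes_power: "integrable \<mu> (\<lambda>u. \<gamma> u / (x0 + \<beta> u) ^ Suc n)"
proof (rule Bochner_Integration.integrable_bound[OF integrable_mult_right[OF integrable_at_centre]])
  show "AE u in \<mu>. norm (\<gamma> u / (x0 + \<beta> u) ^ Suc n) \<le> norm ((1 / (x0 + \<sigma>)) ^ n * (\<gamma> u / (x0 + \<beta> u)))"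
    using AE_stieltjes_power_bounds[of n]
    by eventually_elim (metis abs_of_nonneg abs_ge_self order_trans real_norm_def)
qed measurable

lemma stieltjes_moment_nonneg: "0 \<le> (\<integral>u. \<gamma> u / (x0 + \<beta> u) ^ Suc n \<partial>\<mu>)"
  by (rule integral_nonneg_AE) (use AE_stieltjes_power_bounds[of n] in \<open>auto elim!: eventually_mono\<close>)

lemma stieltjes_moment_le:
  "(\<integral>u. \<gamma> u / (x0 + \<beta> u) ^ Suc n \<partial>\<mu>) \<le> (1 / (x0 + \<sigma>)) ^ n * (\<integral>u. \<gamma> u / (x0 + \<beta> u) \<partial>\<mu>)"
proof -
  have "(\<integral>u. \<gamma> u / (x0 + \<beta> u) ^ Suc n \<partial>\<mu>) \<le> (\<integral>u. (1 / (x0 + \<sigma>)) ^ n * (\<gamma> u / (x0 + \<beta> u)) \<partial>\<mu>)"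
    by (rule integral_mono_AE[OF integrable_stieltjes_power integrable_mult_right[OF integrable_at_centre]])
       (use AE_stieltjes_power_bounds[of n] in \<open>auto elim!: eventually_mono\<close>)
  also have "\<dots> = (1 / (x0 + \<sigma>)) ^ n * (\<integral>u. \<gamma> u / (x0 + \<beta> u) \<partial>\<mu>)"
    by (rule integral_mult_right_zero)
  finally show ?thesis .
qed

lemma summable_stieltjes_moments:
  assumes "0 \<le> t" "t < x0 + \<sigma>"
  shows "summable (\<lambda>n. (\<integral>u. \<gamma> u / (x0 + \<beta> u) ^ Suc n \<partial>\<mu>) * t ^ n)"
proof (rule summable_comparison_test)
  show "summable (\<lambda>n. (t / (x0 + \<sigma>)) ^ n * (\<integral>u. \<gamma> u / (x0 + \<beta> u) \<partial>\<mu>))"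
    using assms by (intro summable_mult2 summable_geometric) auto
  show "\<exists>N. \<forall>n\<ge>N. norm ((\<integral>u. \<gamma> u / (x0 + \<beta> u) ^ Suc n \<partial>\<mu>) * t ^ n)
      \<le> (t / (x0 + \<sigma>)) ^ n * (\<integral>u. \<gamma> u / (x0 + \<beta> u) \<partial>\<mu>)"
  proof (intro exI allI impI)
    fix n :: nat
    have "(\<integral>u. \<gamma> u / (x0 + \<beta> u) ^ Suc n \<partial>\<mu>) * t ^ n
        \<le> (1 / (x0 + \<sigma>)) ^ n * (\<integral>u. \<gamma> u / (x0 + \<beta> u) \<partial>\<mu>) * t ^ n"
      using assms by (intro mult_right_mono stieltjes_moment_le) auto
    then show "norm ((\<integral>u. \<gamma> u / (x0 + \<beta> u) ^ Suc n \<partial>\<mu>) * t ^ n)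
        \<le> (t / (x0 + \<sigma>)) ^ n * (\<integral>u. \<gamma> u / (x0 + \<beta> u) \<partial>\<mu>)"
      using stieltjes_moment_nonneg[of n] assms by (simp add: power_divide field_simps)
  qed
qed

lemma summable_norm_stieltjes_terms:
  fixes z :: complex
  assumes z: "norm z < x0 + \<sigma>"
  shows "AE u in \<mu>. summable (\<lambda>n. norm (of_real (\<gamma> u / (x0 + \<beta> u) ^ Suc n) * (- z) ^ n))"
    and "summable (\<lambda>n. \<integral>u. norm (of_real (\<gamma> u / (x0 + \<beta> u) ^ Suc n) * (- z) ^ n) \<partial>\<mu>)"
proof -
  define f where "f n u = of_real (\<gamma> u / (x0 + \<beta> u) ^ Suc n) * (- z) ^ n" for n u
  have norm_f: "norm (f n u) = \<gamma> u / (x0 + \<beta> u) ^ Suc n * norm z ^ n"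
    if "0 \<le> \<gamma> u" "0 < x0 + \<beta> u" for n u
  proof -
    have "0 \<le> \<gamma> u / (x0 + \<beta> u) ^ Suc n"
      using that by simp
    then show ?thesis
      by (simp only: f_def norm_mult norm_of_real norm_power norm_minus_cancel abs_of_nonneg)
  qed
  have "AE u in \<mu>. summable (\<lambda>n. norm (f n u))"
    using AE_\<beta>_ge AE_\<gamma>_nonneg
  proof eventually_elim
    case (elim u)
    then have "0 < x0 + \<beta> u" "norm z / (x0 + \<beta> u) < 1"
      using centre_pos z by (auto simp: field_simps)
    then have "summable (\<lambda>n. \<gamma> u / (x0 + \<beta> u) * (norm z / (x0 + \<beta> u)) ^ n)"
      by (intro summable_mult summable_geometric) auto
    then show ?case
      using elim \<open>0 < x0 + \<beta> u\<close> by (simp add: norm_f power_divide)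
  qed
  then show "AE u in \<mu>. summable (\<lambda>n. norm (of_real (\<gamma> u / (x0 + \<beta> u) ^ Suc n) * (- z) ^ n))"
    by (simp only: f_def)
  have "(\<integral>u. norm (f n u) \<partial>\<mu>) = (\<integral>u. \<gamma> u / (x0 + \<beta> u) ^ Suc n * norm z ^ n \<partial>\<mu>)" for n
  proof (rule integral_cong_AE)
    show "AE u in \<mu>. norm (f n u) = \<gamma> u / (x0 + \<beta> u) ^ Suc n * norm z ^ n"
      using AE_\<beta>_ge AE_\<gamma>_nonneg by eventually_elim (use centre_pos norm_f in simp)
  qed (unfold f_def, measurable, measurable)
  then have "(\<integral>u. norm (f n u) \<partial>\<mu>) = (\<integral>u. \<gamma> u / (x0 + \<beta> u) ^ Suc n \<partial>\<mu>) * norm z ^ n" for n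
    by (simp only: integral_mult_left_zero)
  then show "summable (\<lambda>n. \<integral>u. norm (of_real (\<gamma> u / (x0 + \<beta> u) ^ Suc n) * (- z) ^ n) \<partial>\<mu>)"
    using summable_stieltjes_moments[of "norm z"] z by (simp add: f_def)
qed

text \<open>Term by term integration of the geometric expansion of \<open>1 / (x0 + \<beta> u + z)\<close>.\<close>
lemma stieltjes_transform_sums:
  assumes z: "norm z < x0 + \<sigma>"
  shows "integrable \<mu> (\<lambda>u. of_real (\<gamma> u) / (of_real (\<beta> u) + (of_real x0 + z)))"
    and "(\<lambda>n. fps_nth (stieltjes_fps \<mu> \<beta> \<gamma> x0) n * z ^ n) sums
           stieltjes_transform \<mu> \<beta> \<gamma> (of_real x0 + z)"
proof -
  define f where "f n u = of_real (\<gamma> u / (x0 + \<beta> u) ^ Suc n) * (- z) ^ n" for n u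
  have integrable_f: "integrable \<mu> (f n)" for n
    unfolding f_def by (intro integrable_mult_left integrable_of_real integrable_stieltjes_power)
  note summable = summable_norm_stieltjes_terms[OF z, folded f_def]
  have limit_eq: "AE u in \<mu>. (\<Sum>n. f n u) = of_real (\<gamma> u) / (of_real (\<beta> u) + (of_real x0 + z))"
    using AE_\<beta>_ge
  proof eventually_elim
    case (elim u)
    then have "(\<lambda>n. f n u) sums (of_real (\<gamma> u) / (of_real (x0 + \<beta> u) + z))"
      unfolding f_def using centre_pos z by (intro geometric_sums_inverse) auto
    then show ?case
      by (simp add: sums_iff add_ac)
  qed
  have integrable_sum: "integrable \<mu> (\<lambda>u. \<Sum>n. f n u)"
    by (rule integrable_suminf[OF integrable_f summable])
  then show "integrable \<mu> (\<lambda>u. of_real (\<gamma> u) / (of_real (\<beta> u) + (of_real x0 + z)))"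
    by (rule integrable_cong_AE_imp) (use limit_eq in auto)
  have "(\<lambda>n. integral\<^sup>L \<mu> (f n)) sums (\<integral>u. (\<Sum>n. f n u) \<partial>\<mu>)"
    by (rule sums_integral[OF integrable_f summable])
  moreover have "integral\<^sup>L \<mu> (f n) = fps_nth (stieltjes_fps \<mu> \<beta> \<gamma> x0) n * z ^ n" for n
  proof -
    have "integral\<^sup>L \<mu> (f n) = of_real (\<integral>u. \<gamma> u / (x0 + \<beta> u) ^ Suc n \<partial>\<mu>) * (- z) ^ n"
      unfolding f_def by (simp only: integral_mult_left_zero integral_complex_of_real)
    then show ?thesis
      by (simp add: stieltjes_fps_def power_minus[of z] mult_ac)
  qed
  moreover have "(\<integral>u. (\<Sum>n. f n u) \<partial>\<mu>) = stieltjes_transform \<mu> \<beta> \<gamma> (of_real x0 + z)"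
    unfolding stieltjes_transform_def
    by (rule integral_cong_AE) (use limit_eq integrable_sum in \<open>auto intro: borel_measurable_integrable\<close>)
  ultimately show "(\<lambda>n. fps_nth (stieltjes_fps \<mu> \<beta> \<gamma> x0) n * z ^ n) sums
           stieltjes_transform \<mu> \<beta> \<gamma> (of_real x0 + z)"
    by simp
qed

lemma fps_conv_radius_stieltjes_fps: "ereal (x0 + \<sigma>) \<le> fps_conv_radius (stieltjes_fps \<mu> \<beta> \<gamma> x0)"
  unfolding fps_conv_radius_def
proof (rule conv_radius_geI_ex')
  fix r :: real
  assume "0 < r" "ereal r < ereal (x0 + \<sigma>)"
  then show "summable (\<lambda>n. fps_nth (stieltjes_fps \<mu> \<beta> \<gamma> x0) n * of_real r ^ n)"
    using stieltjes_transform_sums(2)[of "of_real r"] by (auto simp: sums_iff)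
qed

lemma eval_stieltjes_fps:
  "norm z < x0 + \<sigma> \<Longrightarrow> eval_fps (stieltjes_fps \<mu> \<beta> \<gamma> x0) z = stieltjes_transform \<mu> \<beta> \<gamma> (of_real x0 + z)"
  using stieltjes_transform_sums(2) by (simp add: eval_fps_def sums_iff)

lemma integrable_stieltjes_transform:
  "(z :: complex) \<in> ball (of_real x0) (x0 + \<sigma>) \<Longrightarrow> integrable \<mu> (\<lambda>u. of_real (\<gamma> u) / (of_real (\<beta> u) + z))"
  using stieltjes_transform_sums(1)[of "z - of_real x0"] by (simp add: dist_norm norm_minus_commute)

lemma holomorphic_stieltjes_transform:
  "stieltjes_transform \<mu> \<beta> \<gamma> holomorphic_on ball (of_real x0) (x0 + \<sigma>)"
proof -
  have "eval_fps (stieltjes_fps \<mu> \<beta> \<gamma> x0) holomorphic_on ball 0 (x0 + \<sigma>)"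
    by (rule holomorphic_on_eval_fps)
       (use fps_conv_radius_stieltjes_fps in \<open>auto simp: eball_def intro: less_le_trans[of _ "ereal (x0 + \<sigma>)"]\<close>)
  then have "(\<lambda>z. eval_fps (stieltjes_fps \<mu> \<beta> \<gamma> x0) (z - of_real x0)) holomorphic_on ball (of_real x0) (x0 + \<sigma>)"
    by (rule holomorphic_on_compose_gen[unfolded o_def, rotated])
       (auto intro!: holomorphic_intros simp: dist_norm norm_minus_commute)
  then show ?thesis
    by (rule holomorphic_cong[THEN iffD1, rotated 2])
       (auto simp: eval_stieltjes_fps dist_norm norm_minus_commute)
qed

lemma stieltjes_transform_of_real:
  assumes "- \<sigma> < x" "x < 2 * x0 + \<sigma>"
  shows "integrable \<mu> (\<lambda>u. \<gamma> u / (x + \<beta> u))"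
    and "stieltjes_transform \<mu> \<beta> \<gamma> (of_real x) = of_real (\<integral>u. \<gamma> u / (x + \<beta> u) \<partial>\<mu>)"
proof -
  have complex_eq: "(\<lambda>u. of_real (\<gamma> u) / (of_real (\<beta> u) + of_real x)) = (\<lambda>u. complex_of_real (\<gamma> u / (x + \<beta> u)))"
    by (simp add: add_ac)
  have "(of_real x :: complex) \<in> ball (of_real x0) (x0 + \<sigma>)"
    using assms by (simp add: dist_real_def)
  then have "integrable \<mu> (\<lambda>u. of_real (\<gamma> u) / (of_real (\<beta> u) + of_real x) :: complex)"
    by (rule integrable_stieltjes_transform)
  then have "integrable \<mu> (\<lambda>u. complex_of_real (\<gamma> u / (x + \<beta> u)))"
    by (simp only: complex_eq)
  then show "integrable \<mu> (\<lambda>u. \<gamma> u / (x + \<beta> u))"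
    by (rule complex_of_real_integrable_eq[THEN iffD1])
  show "stieltjes_transform \<mu> \<beta> \<gamma> (of_real x) = of_real (\<integral>u. \<gamma> u / (x + \<beta> u) \<partial>\<mu>)"
    unfolding stieltjes_transform_def complex_eq by (rule integral_complex_of_real)
qed

lemma AE_weight_zero_if_moments_decay:
  assumes \<rho>: "0 < \<rho>"
    and decay: "(\<lambda>n. (\<integral>u. \<gamma> u / (x0 + \<beta> u) ^ Suc n \<partial>\<mu>) * \<rho> ^ n) \<longlonglongrightarrow> 0"
  shows "AE u in \<mu>. x0 + \<beta> u \<le> \<rho> \<longrightarrow> \<gamma> u = 0"
proof -
  define g where "g u = (if x0 + \<beta> u \<le> \<rho> then \<gamma> u / \<rho> else 0)" for u
  have g_bounds: "AE u in \<mu>. 0 \<le> g u \<and> g u \<le> \<gamma> u / (x0 + \<beta> u) ^ Suc n * \<rho> ^ n" for n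
    using AE_\<beta>_ge AE_\<gamma>_nonneg
  proof eventually_elim
    case (elim u)
    then show ?case
      using truncated_weight_le[of "\<gamma> u" "x0 + \<beta> u" \<rho> n] \<rho> centre_pos by (simp add: g_def)
  qed
  have integrable_g: "integrable \<mu> g"
  proof (rule Bochner_Integration.integrable_bound[OF integrable_stieltjes_power[of 0]])
    show "AE u in \<mu>. norm (g u) \<le> norm (\<gamma> u / (x0 + \<beta> u) ^ Suc 0)"
      using g_bounds[of 0]
    proof eventually_elim
      case (elim u)
      then have "norm (g u) \<le> \<gamma> u / (x0 + \<beta> u) ^ Suc 0"
        by simp
      also have "\<dots> \<le> norm (\<gamma> u / (x0 + \<beta> u) ^ Suc 0)"
        by (simp only: real_norm_def abs_ge_self)
      finally show ?case .
    qed
  qed (unfold g_def, measurable)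
  have "(\<integral>u. g u \<partial>\<mu>) \<le> (\<integral>u. \<gamma> u / (x0 + \<beta> u) ^ Suc n * \<rho> ^ n \<partial>\<mu>)" for n
    by (rule integral_mono_AE[OF integrable_g integrable_mult_left[OF integrable_stieltjes_power]])
       (use g_bounds[of n] in \<open>auto elim: eventually_mono\<close>)
  then have "(\<integral>u. g u \<partial>\<mu>) \<le> (\<integral>u. \<gamma> u / (x0 + \<beta> u) ^ Suc n \<partial>\<mu>) * \<rho> ^ n" for n
    by (simp only: integral_mult_left_zero)
  then have "(\<integral>u. g u \<partial>\<mu>) \<le> 0"
    by (intro LIMSEQ_le_const[OF decay]) auto
  moreover have g_nonneg: "AE u in \<mu>. 0 \<le> g u"
    using g_bounds[of 0] by eventually_elim auto
  ultimately have "AE u in \<mu>. g u = 0"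
    using integral_nonneg_AE[OF g_nonneg] integral_nonneg_eq_0_iff_AE[OF integrable_g g_nonneg] by simp
  then show ?thesis
    by eventually_elim (use \<rho> in \<open>auto simp: g_def split: if_splits\<close>)
qed

end

lemma of_real_islimpt_punctured_interval:
  assumes "a < x" "x < b"
  shows "(of_real x :: complex) islimpt of_real ` ({a<..<b} - {x})"
proof (rule islimpt_approachable[THEN iffD2], intro allI impI)
  fix e :: real
  assume "0 < e"
  define t where "t = min (b - x) e / 2"
  have t_le: "2 * t \<le> b - x" and t: "0 < t" "t < e"
    using \<open>0 < e\<close> assms by (auto simp: t_def)
  have "x + t < b"
    using t_le assms by linarith
  show "\<exists>y\<in>(of_real ` ({a<..<b} - {x}) :: complex set). y \<noteq> of_real x \<and> dist y (of_real x) < e"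
  proof (intro bexI[of _ "of_real (x + t)"] conjI)
    show "dist (of_real (x + t) :: complex) (of_real x) < e"
      using t by (simp only: dist_of_real dist_real_def)
  qed (use assms t \<open>x + t < b\<close> in \<open>auto simp: image_iff simp del: of_real_add\<close>)
qed

context
  fixes \<mu> :: "real measure" and \<beta> \<gamma> :: "real \<Rightarrow> real" and x0 R :: real
    and P :: "complex \<Rightarrow> complex"
  assumes \<beta>_measurable: "\<beta> \<in> borel_measurable \<mu>" and \<gamma>_measurable: "\<gamma> \<in> borel_measurable \<mu>"
    and AE_\<beta>: "AE u in \<mu>. 0 \<le> \<beta> u" and AE_\<gamma>: "AE u in \<mu>. 0 \<le> \<gamma> u"
    and x0: "0 < x0" and integrable: "integrable \<mu> (\<lambda>u. \<gamma> u / (x0 + \<beta> u))"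
    and P: "P holomorphic_on ball (of_real x0) R" and x0_R: "x0 < R"
    and P_eq: "\<And>x. 0 < x \<Longrightarrow> x < 2 * x0 \<Longrightarrow> x \<noteq> x0 \<Longrightarrow>
                 P (of_real x) = of_real (\<integral>u. \<gamma> u / (x + \<beta> u) \<partial>\<mu>)"
begin

lemma holomorphic_extension_eq_stieltjes_transform:
  assumes z: "z \<in> ball (of_real x0) x0"
  shows "P z = stieltjes_transform \<mu> \<beta> \<gamma> z"
proof -
  note stieltjes = \<beta>_measurable \<gamma>_measurable AE_\<beta> AE_\<gamma> integrable x0
  define U :: "complex set" where "U = of_real ` ({0<..<2 * x0} - {x0})"
  have "(\<lambda>z. P z - stieltjes_transform \<mu> \<beta> \<gamma> z) holomorphic_on ball (of_real x0) x0"
    using holomorphic_on_subset[OF P subset_ball] holomorphic_stieltjes_transform[of \<beta> \<mu> \<gamma> 0 x0]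
      stieltjes x0_R
    by (intro holomorphic_on_diff) auto
  moreover have "P w - stieltjes_transform \<mu> \<beta> \<gamma> w = 0" if w: "w \<in> U" for w
  proof -
    obtain x where x: "x \<in> {0<..<2 * x0} - {x0}" and w: "w = of_real x"
      using w unfolding U_def by blast
    then show ?thesis
      using P_eq stieltjes_transform_of_real(2)[of \<beta> \<mu> \<gamma> 0 x0 x] stieltjes by simp
  qed
  moreover have "U \<subseteq> ball (of_real x0) x0" "of_real x0 islimpt U"
    using x0 by (auto simp: U_def dist_real_def intro!: of_real_islimpt_punctured_interval)
  ultimately show ?thesis
    using analytic_continuation[of "\<lambda>z. P z - stieltjes_transform \<mu> \<beta> \<gamma> z" "ball (of_real x0) x0" U
        "of_real x0" z] z x0
    by simp
qed

lemma holomorphic_extension_has_fps_expansion: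
  "(\<lambda>z. P (of_real x0 + z)) has_fps_expansion stieltjes_fps \<mu> \<beta> \<gamma> x0"
  unfolding has_fps_expansion_def
proof
  note stieltjes = \<beta>_measurable \<gamma>_measurable AE_\<beta> AE_\<gamma> integrable x0
  show "0 < fps_conv_radius (stieltjes_fps \<mu> \<beta> \<gamma> x0)"
    using fps_conv_radius_stieltjes_fps[of \<beta> \<mu> \<gamma> 0 x0] stieltjes
    by simp (meson ereal_less(2) less_le_trans)
  have "eval_fps (stieltjes_fps \<mu> \<beta> \<gamma> x0) z = P (of_real x0 + z)" if "z \<in> ball 0 x0" for z
    using that eval_stieltjes_fps[of \<beta> \<mu> \<gamma> 0 x0 z] stieltjes
      holomorphic_extension_eq_stieltjes_transform[of "of_real x0 + z"]
    by (simp add: dist_norm)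
  then show "\<forall>\<^sub>F z in nhds 0. eval_fps (stieltjes_fps \<mu> \<beta> \<gamma> x0) z = P (of_real x0 + z)"
    using eventually_nhds_in_open[of "ball 0 x0" 0] x0 by (auto elim!: eventually_mono)
qed

text \<open>
  The power series of the transform at \<open>x0\<close>, with the alternating moments as coefficients, is
  that of \<open>P\<close> and so converges at \<open>-\<rho>\<close>; positivity of the moments turns this into their decay.\<close>
theorem AE_weight_zero_if_holomorphic_extension:
  assumes \<rho>: "0 < \<rho>" "\<rho> < R"
  shows "AE u in \<mu>. x0 + \<beta> u \<le> \<rho> \<longrightarrow> \<gamma> u = 0"
proof -
  note stieltjes = \<beta>_measurable \<gamma>_measurable AE_\<beta> AE_\<gamma> integrable x0
  define F where "F = stieltjes_fps \<mu> \<beta> \<gamma> x0"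
  have "(\<lambda>z. P (of_real x0 + z)) holomorphic_on ball 0 R"
    by (rule holomorphic_on_compose_gen[OF _ P, unfolded o_def])
       (auto intro!: holomorphic_intros simp: dist_norm)
  then have "(\<lambda>n. (deriv ^^ n) (\<lambda>z. P (of_real x0 + z)) 0 / fact n * (- of_real \<rho> - 0) ^ n) sums
      P (of_real x0 + - of_real \<rho>)"
    by (rule holomorphic_power_series) (use \<rho> in auto)
  then have "summable (\<lambda>n. fps_nth F n * (- of_real \<rho>) ^ n)"
    by (simp add: F_def fps_nth_fps_expansion[OF holomorphic_extension_has_fps_expansion] sums_iff)
  then have "(\<lambda>n. norm (fps_nth F n * (- of_real \<rho>) ^ n)) \<longlonglongrightarrow> 0"
    by (intro tendsto_norm_zero summable_LIMSEQ_zero)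
  moreover have "norm (fps_nth F n * (- of_real \<rho>) ^ n) = (\<integral>u. \<gamma> u / (x0 + \<beta> u) ^ Suc n \<partial>\<mu>) * \<rho> ^ n" for n
    using stieltjes_moment_nonneg[of \<beta> \<mu> \<gamma> 0 x0 n] stieltjes \<rho>
    by (simp add: F_def stieltjes_fps_def norm_mult norm_power)
  ultimately show ?thesis
    using AE_weight_zero_if_moments_decay[of \<beta> \<mu> \<gamma> 0 x0 \<rho>] stieltjes \<rho> by simp
qed

end

lemma integral_pos_AE:
  fixes f :: "'a \<Rightarrow> real"
  assumes f: "integrable \<mu> f" and pos: "AE x in \<mu>. 0 < f x"
    and nonzero: "emeasure \<mu> (space \<mu>) \<noteq> 0"
  shows "0 < (\<integral>x. f x \<partial>\<mu>)"
proof -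
  have nonneg: "AE x in \<mu>. 0 \<le> f x"
    using pos by eventually_elim simp
  have "(\<integral>x. f x \<partial>\<mu>) \<noteq> 0"
  proof
    assume "(\<integral>x. f x \<partial>\<mu>) = 0"
    then have "AE x in \<mu>. f x = 0"
      using integral_nonneg_eq_0_iff_AE[OF f nonneg] by simp
    then have "AE x in \<mu>. False"
      using pos by eventually_elim simp
    then show False
      using nonzero by (simp add: eventually_False ae_filter_eq_bot_iff)
  qed
  then show ?thesis
    using integral_nonneg_AE[OF nonneg] by simp
qed

lemma Im_stieltjes_transform_mult_Im_neg:
  assumes integrable: "integrable \<mu> (\<lambda>u. of_real (\<gamma> u) / (of_real (\<beta> u) + z))"
    and pos: "AE u in \<mu>. 0 < \<gamma> u" and nonzero: "emeasure \<mu> (space \<mu>) \<noteq> 0"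
    and z: "Im z \<noteq> 0"
  shows "Im (stieltjes_transform \<mu> \<beta> \<gamma> z) * Im z < 0"
proof -
  let ?h = "\<lambda>u. of_real (\<gamma> u) / (of_real (\<beta> u) + z)"
  have Im_eq: "Im (?h u) * Im z = - (\<gamma> u * Im z ^ 2 / ((\<beta> u + Re z) ^ 2 + Im z ^ 2))" for u
    by (simp add: Im_divide power2_eq_square)
  have "0 < (\<integral>u. \<gamma> u * Im z ^ 2 / ((\<beta> u + Re z) ^ 2 + Im z ^ 2) \<partial>\<mu>)"
  proof (rule integral_pos_AE[OF _ _ nonzero])
    have "integrable \<mu> (\<lambda>u. - (Im (?h u) * Im z))"
      using integrable_bounded_linear[OF bounded_linear_Im integrable] by simp
    then show "integrable \<mu> (\<lambda>u. \<gamma> u * Im z ^ 2 / ((\<beta> u + Re z) ^ 2 + Im z ^ 2))"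
      by (simp only: Im_eq minus_minus)
    show "AE u in \<mu>. 0 < \<gamma> u * Im z ^ 2 / ((\<beta> u + Re z) ^ 2 + Im z ^ 2)"
      using pos by eventually_elim (use z in \<open>auto intro!: divide_pos_pos add_nonneg_pos\<close>)
  qed
  moreover have "Im (stieltjes_transform \<mu> \<beta> \<gamma> z) * Im z = (\<integral>u. Im (?h u) * Im z \<partial>\<mu>)"
    using integral_bounded_linear[OF bounded_linear_Im integrable]
    by (simp add: stieltjes_transform_def)
  ultimately show ?thesis
    by (simp only: Im_eq integral_minus)
qed

lemma affine_nonzero_if_Im_mult_Im_neg:
  fixes H :: "complex \<Rightarrow> complex" and c d :: real
  assumes Im: "Im (H z) * Im z < 0" and "0 \<le> c" "0 \<le> d"
  shows "of_real c + z * (of_real d + H z) \<noteq> 0"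
proof
  assume zero: "of_real c + z * (of_real d + H z) = 0"
  have z: "z \<noteq> 0"
    using Im by auto
  have "Im (of_real c / z) * Im z = - (c * Im z ^ 2 / (Re z ^ 2 + Im z ^ 2))"
    by (simp add: Im_divide power2_eq_square)
  also have "\<dots> \<le> 0"
    using \<open>0 \<le> c\<close> by simp
  finally have "Im (of_real c / z + of_real d + H z) * Im z < 0"
    using Im by (simp add: algebra_simps)
  moreover have "of_real c / z + of_real d + H z = 0"
    using zero z by (simp add: field_simps)
  ultimately show False
    by simp
qed

lemma real_in_ball_1E:
  assumes "z \<in> ball (1 :: complex) R" "Im z = 0"
  obtains x where "z = of_real x" "1 - R < x" "x < 1 + R"
proof
  show z: "z = of_real (Re z)"
    using assms(2) by (simp add: complex_eq_iff)
  have "dist (of_real 1) (of_real (Re z) :: complex) < R"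
    using assms(1) z by (metis mem_ball of_real_1)
  then have "dist 1 (Re z) < R"
    by (simp only: dist_of_real)
  then show "1 - R < Re z" "Re z < 1 + R"
    by (auto simp: dist_real_def)
qed

section \<open>Measures of the class \<open>Mclass\<close> and their supports\<close>

lemma sets_Mclass: "m \<in> Mclass \<Longrightarrow> sets m = sets borel"
  by (simp add: Mclass_def)

lemma AE_Mclass_pos: "m \<in> Mclass \<Longrightarrow> AE u in m. 0 < u"
  by (rule AE_I'[of "{..0}"]) (auto simp: Mclass_def null_sets_def)

lemma integrable_Mclass_inverse:
  assumes m: "m \<in> Mclass"
  shows "integrable m (\<lambda>u. 1 / (1 + u))"
proof -
  have "(\<integral>\<^sup>+ u. ennreal (norm (1 / (1 + u))) \<partial>m) = (\<integral>\<^sup>+ u. ennreal (1 / (1 + u)) \<partial>m)"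
    using AE_Mclass_pos[OF m] by (intro nn_integral_cong_AE) (auto elim!: eventually_mono)
  also have "\<dots> < \<infinity>"
    using m by (simp add: Mclass_def)
  finally show ?thesis
    using sets_Mclass[OF m] by (intro integrableI_bounded) (auto simp: measurable_def)
qed

lemma integrable_Mclass_bounded:
  assumes m: "m \<in> Mclass" and f [measurable]: "f \<in> borel_measurable borel"
    and bound: "AE u in m. \<bar>f u\<bar> \<le> C / (1 + u)"
  shows "integrable m f"
proof (rule Bochner_Integration.integrable_bound[OF integrable_mult_right[OF integrable_Mclass_inverse[OF m]]])
  show "f \<in> borel_measurable m"
    using sets_Mclass[OF m] by (simp add: measurable_def)
  show "AE u in m. norm (f u) \<le> norm (C * (1 / (1 + u)))"
    using bound
  proof eventually_elim
    case (elim u)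
    then have "\<bar>f u\<bar> \<le> C * (1 / (1 + u))"
      by simp
    also have "\<dots> \<le> \<bar>C * (1 / (1 + u))\<bar>"
      by (rule abs_ge_self)
    finally show ?case
      by (simp only: real_norm_def)
  qed
qed

lemma integrable_Mclass_shifted_inverse:
  assumes m: "m \<in> Mclass" and x: "0 < x"
  shows "integrable m (\<lambda>u. 1 / (x + u))"
proof (rule integrable_Mclass_bounded[OF m])
  show "AE u in m. \<bar>1 / (x + u)\<bar> \<le> max 1 (1 / x) / (1 + u)"
    using AE_Mclass_pos[OF m]
  proof eventually_elim
    case (elim u)
    have "1 + u \<le> max 1 (1 / x) * (x + u)"
    proof (cases "1 \<le> x")
      case False
      then have "1 + u \<le> 1 / x * (x + u)"
        using x elim by (simp add: field_simps)
      also have "\<dots> \<le> max 1 (1 / x) * (x + u)"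
        using x elim by (intro mult_right_mono) auto
      finally show ?thesis .
    qed (use elim in simp)
    then show ?case
      using x elim by (simp add: field_simps)
  qed
qed measurable

lemma null_sets_if_disjoint_supp:
  fixes \<mu> :: "real measure"
  assumes sets: "sets \<mu> = sets borel" and A: "A \<in> sets borel" "A \<subseteq> {0<..}" "A \<inter> supp \<mu> = {}"
  shows "A \<in> null_sets \<mu>"
proof -
  define F where "F = {I. \<exists>x e. I = {x - e <..< x + e} \<and> emeasure \<mu> I = 0}"
  have "open I" if "I \<in> F" for I
    using that by (auto simp: F_def)
  then obtain F' where F': "F' \<subseteq> F" "countable F'" "\<Union>F' = \<Union>F"
    using Lindelof[of F] by blast
  have "A \<subseteq> \<Union>F"
  proof
    fix x
    assume "x \<in> A"
    then have "x \<notin> supp \<mu>" "0 < x"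
      using A by auto
    then obtain e where "0 < e" "emeasure \<mu> {x - e <..< x + e} = 0"
      by (auto simp: supp_def)
    then have "{x - e <..< x + e} \<in> F" "x \<in> {x - e <..< x + e}"
      by (auto simp: F_def)
    then show "x \<in> \<Union>F"
      by blast
  qed
  moreover have "(\<Union>I\<in>F'. I) \<in> null_sets \<mu>"
    using F'(1,2) sets by (intro null_sets_UN') (auto simp: F_def null_sets_def)
  ultimately show ?thesis
    using F' A sets by (auto intro: null_sets_subset)
qed

lemma supp_disjoint_if_AE_not_in:
  fixes \<mu> :: "real measure"
  assumes sets: "sets \<mu> = sets borel" and U: "open U" and AE: "AE u in \<mu>. u \<notin> U"
    and x: "x \<in> supp \<mu>"
  shows "x \<notin> U"
proof
  assume "x \<in> U"
  then obtain e where e: "0 < e" "ball x e \<subseteq> U"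
    using U by (auto simp: open_contains_ball)
  obtain N where N: "N \<in> null_sets \<mu>" "{u \<in> space \<mu>. u \<in> U} \<subseteq> N"
    using AE by (auto simp: eventually_ae_filter)
  have "{x - e <..< x + e} \<subseteq> ball x e"
    by (auto simp: ball_def dist_real_def)
  also have "\<dots> \<subseteq> N"
    using e N sets by (auto simp: sets_eq_imp_space_eq)
  finally have "{x - e <..< x + e} \<subseteq> N" .
  then have "emeasure \<mu> {x - e <..< x + e} = 0"
    by (rule emeasure_eq_0[OF null_setsD2[OF N(1)] null_setsD1[OF N(1)]])
  then show False
    using x e by (auto simp: supp_def)
qed

lemma AE_infS_le:
  assumes m: "m \<in> Mclass"
  shows "AE u in m. infS m \<le> ereal u"
proof -
  have "{u. 0 < u \<and> ereal u < infS m} \<in> null_sets m"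
    by (rule null_sets_if_disjoint_supp[OF sets_Mclass[OF m]])
       (auto simp: infS_def, meson Inf_lower imageI leD)
  then have "AE u in m. \<not> (0 < u \<and> ereal u < infS m)"
    by (rule AE_I') auto
  then show ?thesis
    using AE_Mclass_pos[OF m] by eventually_elim auto
qed

lemma AE_le_supS:
  assumes m: "m \<in> Mclass"
  shows "AE u in m. ereal u \<le> supS m"
proof -
  have "{u. 0 < u \<and> supS m < ereal u} \<in> null_sets m"
    by (rule null_sets_if_disjoint_supp[OF sets_Mclass[OF m]])
       (auto simp: supS_def, meson Sup_upper imageI leD)
  then have "AE u in m. \<not> (0 < u \<and> supS m < ereal u)"
    by (rule AE_I') auto
  then show ?thesis
    using AE_Mclass_pos[OF m] by eventually_elim auto
qed

lemma supp_nonempty: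
  assumes m: "m \<in> Mclass" and nonzero: "emeasure m (space m) \<noteq> 0"
  shows "supp m \<noteq> {}"
proof
  assume "supp m = {}"
  then have "{0<..} \<in> null_sets m"
    by (intro null_sets_if_disjoint_supp[OF sets_Mclass[OF m]]) auto
  moreover have "{..0} \<in> null_sets m"
    using m by (auto simp: Mclass_def null_sets_def)
  ultimately have "{..0} \<union> {0<..} \<in> null_sets m"
    by auto
  moreover have "{..0::real} \<union> {0<..} = space m"
    using sets_Mclass[OF m] by (auto simp: sets_eq_imp_space_eq)
  ultimately show False
    using nonzero by auto
qed

lemma infS_le_supp: "x \<in> supp m \<Longrightarrow> infS m \<le> ereal x"
  by (auto simp: infS_def intro: Inf_lower)

lemma supp_le_supS: "x \<in> supp m \<Longrightarrow> ereal x \<le> supS m"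
  by (auto simp: supS_def intro: Sup_upper)

lemma infS_nonneg: "0 \<le> infS m"
  by (auto simp: infS_def supp_def intro!: Inf_greatest)

lemma infS_le_supS: "supp m \<noteq> {} \<Longrightarrow> infS m \<le> supS m"
  unfolding infS_def supS_def by (intro Inf_le_Sup) auto

lemma supS_pos:
  assumes "supp m \<noteq> {}"
  shows "0 < supS m"
proof -
  obtain x where x: "x \<in> supp m"
    using assms by auto
  then have "0 < x"
    by (simp add: supp_def)
  then show ?thesis
    using supp_le_supS[OF x] by (meson ereal_less(2) less_le_trans)
qed

lemma infS_finite:
  assumes "supp m \<noteq> {}"
  obtains s where "infS m = ereal s" "0 \<le> s"
proof -
  obtain x where "x \<in> supp m"
    using assms by auto
  then show ?thesis
    using that infS_le_supp[of x m] infS_nonneg[of m] by (cases "infS m") auto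
qed

section \<open>Support bounds from holomorphic extensions\<close>

lemma integral_difference_quotient:
  fixes M :: "real measure" and \<beta> \<kappa> :: "real \<Rightarrow> real" and x :: real
  assumes \<beta>_measurable [measurable]: "\<beta> \<in> borel_measurable M"
    and \<kappa>_measurable [measurable]: "\<kappa> \<in> borel_measurable M"
    and AE_\<beta>: "AE u in M. 0 \<le> \<beta> u" and x: "0 < x"
    and integrable: "integrable M (\<lambda>u. \<kappa> u * x / (x + \<beta> u))" "integrable M (\<lambda>u. \<kappa> u * 1 / (1 + \<beta> u))"
  shows "(\<integral>u. \<kappa> u * x / (x + \<beta> u) \<partial>M) - (\<integral>u. \<kappa> u * 1 / (1 + \<beta> u) \<partial>M) =
    (x - 1) * (\<integral>u. \<kappa> u * \<beta> u / (1 + \<beta> u) / (x + \<beta> u) \<partial>M)"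
proof -
  have "(\<integral>u. \<kappa> u * x / (x + \<beta> u) \<partial>M) - (\<integral>u. \<kappa> u * 1 / (1 + \<beta> u) \<partial>M) =
      (\<integral>u. \<kappa> u * x / (x + \<beta> u) - \<kappa> u * 1 / (1 + \<beta> u) \<partial>M)"
    using integrable by (rule Bochner_Integration.integral_diff[symmetric])
  also have "\<dots> = (\<integral>u. (x - 1) * (\<kappa> u * \<beta> u / (1 + \<beta> u) / (x + \<beta> u)) \<partial>M)"
  proof (rule integral_cong_AE)
    show "AE u in M. \<kappa> u * x / (x + \<beta> u) - \<kappa> u * 1 / (1 + \<beta> u) =
        (x - 1) * (\<kappa> u * \<beta> u / (1 + \<beta> u) / (x + \<beta> u))"
      using AE_\<beta>
    proof eventually_elim
      case (elim u)
      then have "x + \<beta> u \<noteq> 0" "1 + \<beta> u \<noteq> 0"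
        using x by auto
      then show ?case
        by (simp add: field_simps)
    qed
  qed measurable
  also have "\<dots> = (x - 1) * (\<integral>u. \<kappa> u * \<beta> u / (1 + \<beta> u) / (x + \<beta> u) \<partial>M)"
    by (rule integral_mult_right_zero)
  finally show ?thesis .
qed

lemma integrable_difference_quotient_weight:
  fixes M :: "real measure" and \<beta> \<kappa> :: "real \<Rightarrow> real"
  assumes [measurable]: "\<beta> \<in> borel_measurable M" "\<kappa> \<in> borel_measurable M"
    and AE_\<beta>: "AE u in M. 0 \<le> \<beta> u" and AE_\<kappa>: "AE u in M. 0 \<le> \<kappa> u"
    and integrable: "integrable M (\<lambda>u. \<kappa> u * 1 / (1 + \<beta> u))"
  shows "integrable M (\<lambda>u. \<kappa> u * \<beta> u / (1 + \<beta> u) / (1 + \<beta> u))"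
proof (rule Bochner_Integration.integrable_bound[OF integrable])
  show "AE u in M. norm (\<kappa> u * \<beta> u / (1 + \<beta> u) / (1 + \<beta> u)) \<le> norm (\<kappa> u * 1 / (1 + \<beta> u))"
    using AE_\<beta> AE_\<kappa>
  proof eventually_elim
    case (elim u)
    have "\<kappa> u * \<beta> u / (1 + \<beta> u) / (1 + \<beta> u) = \<beta> u / (1 + \<beta> u) * (\<kappa> u * 1 / (1 + \<beta> u))"
      by simp
    also have "\<dots> \<le> \<kappa> u * 1 / (1 + \<beta> u)"
      using elim by (intro mult_left_le_one_le) auto
    finally show ?case
      using elim by simp
  qed
qed measurable

text \<open>
  The difference quotient at \<open>1\<close> of \<open>c + d x + \<integral> \<kappa>(u) x / (x + \<beta>(u)) M(du)\<close>, minus \<open>d\<close>,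
  is the transform of the weight \<open>\<kappa> \<beta> / (1 + \<beta>)\<close>.\<close>
lemma AE_weight_zero_if_affine_extension:
  fixes M :: "real measure" and \<beta> \<kappa> :: "real \<Rightarrow> real" and c d R \<rho> :: real
    and G :: "complex \<Rightarrow> complex"
  assumes \<beta>_measurable [measurable]: "\<beta> \<in> borel_measurable M"
    and \<kappa>_measurable [measurable]: "\<kappa> \<in> borel_measurable M"
    and AE_\<beta>: "AE u in M. 0 \<le> \<beta> u" and AE_\<kappa>: "AE u in M. 0 \<le> \<kappa> u"
    and integrable: "\<And>x. 0 < x \<Longrightarrow> x < 2 \<Longrightarrow> integrable M (\<lambda>u. \<kappa> u * x / (x + \<beta> u))"
    and G: "G holomorphic_on ball 1 R" and R: "1 < R"
    and G_eq: "\<And>x. 0 < x \<Longrightarrow> x < 2 \<Longrightarrow>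
                 G (of_real x) = of_real (c + d * x + (\<integral>u. \<kappa> u * x / (x + \<beta> u) \<partial>M))"
    and \<rho>: "0 < \<rho>" "\<rho> < R"
  shows "AE u in M. 1 + \<beta> u \<le> \<rho> \<longrightarrow> \<kappa> u * \<beta> u = 0"
proof -
  define \<gamma> where "\<gamma> u = \<kappa> u * \<beta> u / (1 + \<beta> u)" for u
  define P where "P z = (if z = 1 then deriv G 1 else (G z - G 1) / (z - 1)) - of_real d" for z
  have P: "P holomorphic_on ball (of_real 1) R"
    unfolding P_def of_real_1 by (intro holomorphic_on_diff holomorphic_on_const pole_lemma_open G) auto
  have integral_diff: "(\<integral>u. \<kappa> u * x / (x + \<beta> u) \<partial>M) - (\<integral>u. \<kappa> u * 1 / (1 + \<beta> u) \<partial>M) =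
      (x - 1) * (\<integral>u. \<gamma> u / (x + \<beta> u) \<partial>M)" if "0 < x" "x < 2" for x
    unfolding \<gamma>_def using that integrable[OF that] integrable[of 1]
    by (intro integral_difference_quotient[OF \<beta>_measurable \<kappa>_measurable AE_\<beta>]) auto
  have P_eq: "P (of_real x) = of_real (\<integral>u. \<gamma> u / (x + \<beta> u) \<partial>M)" if x: "0 < x" "x < 2 * 1" "x \<noteq> 1" for x
  proof -
    have "of_real x \<noteq> (1 :: complex)"
      using x(3) by (metis of_real_1 of_real_eq_iff)
    then have "P (of_real x) = of_real ((c + d * x + (\<integral>u. \<kappa> u * x / (x + \<beta> u) \<partial>M)
        - (c + d + (\<integral>u. \<kappa> u * 1 / (1 + \<beta> u) \<partial>M))) / (x - 1) - d)"
      using G_eq[of x] G_eq[of 1] x by (simp add: P_def)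
    also have "(c + d * x + (\<integral>u. \<kappa> u * x / (x + \<beta> u) \<partial>M)
        - (c + d + (\<integral>u. \<kappa> u * 1 / (1 + \<beta> u) \<partial>M))) / (x - 1) - d = (\<integral>u. \<gamma> u / (x + \<beta> u) \<partial>M)"
      using integral_diff[of x] x by (simp add: field_simps)
    finally show ?thesis .
  qed
  have "AE u in M. 1 + \<beta> u \<le> \<rho> \<longrightarrow> \<gamma> u = 0"
  proof (rule AE_weight_zero_if_holomorphic_extension[OF \<beta>_measurable _ AE_\<beta> _ _ _ P R P_eq \<rho>])
    show "\<gamma> \<in> borel_measurable M"
      unfolding \<gamma>_def by measurable
    show "AE u in M. 0 \<le> \<gamma> u"
      using AE_\<beta> AE_\<kappa> by eventually_elim (simp add: \<gamma>_def)
    show "integrable M (\<lambda>u. \<gamma> u / (1 + \<beta> u))"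
      unfolding \<gamma>_def using integrable[of 1]
      by (intro integrable_difference_quotient_weight[OF \<beta>_measurable \<kappa>_measurable AE_\<beta> AE_\<kappa>]) auto
  qed auto
  then show ?thesis
    using AE_\<beta> by eventually_elim (auto simp: \<gamma>_def)
qed

lemma infS_ge_if_holomorphic_extension:
  fixes M :: "real measure" and G :: "complex \<Rightarrow> complex" and a b t :: real
  assumes M: "M \<in> Mclass" and t: "0 < t" and G: "G holomorphic_on ball 1 (1 + t)"
    and G_eq: "\<And>x. 0 < x \<Longrightarrow> x < 2 \<Longrightarrow> G (of_real x) = of_real (a * x + b + (\<integral>u. x / (x + u) \<partial>M))"
  shows "ereal t \<le> infS M"
  unfolding infS_def
proof (rule Inf_greatest, clarify)
  fix x
  assume x: "x \<in> supp M"
  show "ereal t \<le> ereal x"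
  proof (rule ccontr)
    assume "\<not> ereal t \<le> ereal x"
    then have "x < t"
      by simp
    have "0 < x"
      using x by (simp add: supp_def)
    then have "0 < 1 + (x + t) / 2"
      using \<open>x < t\<close> by (simp add: field_simps)
    have "AE u in M. 1 + u \<le> 1 + (x + t) / 2 \<longrightarrow> 1 * u = 0"
    proof (rule AE_weight_zero_if_affine_extension[OF _ _ _ _ _ G])
      show "integrable M (\<lambda>u. 1 * y / (y + u))" if "0 < y" for y
        using integrable_mult_right[OF integrable_Mclass_shifted_inverse[OF M that], of y] by simp
      show "G (of_real y) = of_real (b + a * y + (\<integral>u. 1 * y / (y + u) \<partial>M))" if "0 < y" "y < 2" for y
        using G_eq[OF that] by (simp add: ac_simps)
    qed (use sets_Mclass[OF M] AE_Mclass_pos[OF M] \<open>0 < 1 + (x + t) / 2\<close> t \<open>x < t\<close> in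
          \<open>auto simp: supp_def cong: measurable_cong_sets elim!: eventually_mono\<close>)
    then have "AE u in M. u \<notin> {..<(x + t) / 2}"
      using AE_Mclass_pos[OF M] by eventually_elim auto
    then have "x \<notin> {..<(x + t) / 2}"
      by (rule supp_disjoint_if_AE_not_in[OF sets_Mclass[OF M] open_lessThan _ x])
    then show False
      using \<open>x < t\<close> by simp
  qed
qed

lemma reciprocal_kernel_Mclass:
  assumes M: "M \<in> Mclass" and w: "0 < w"
  shows "integrable M (\<lambda>u. 1 / u * w / (w + 1 / u))"
    and "(\<integral>u. w / (1 + w * u) \<partial>M) = (\<integral>u. 1 / u * w / (w + 1 / u) \<partial>M)"
proof -
  have AE_eq: "AE u in M. 1 / (1 / w + u) = 1 / u * w / (w + 1 / u)"
    using AE_Mclass_pos[OF M] by eventually_elim (use w in \<open>simp add: field_simps\<close>)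
  show "integrable M (\<lambda>u. 1 / u * w / (w + 1 / u))"
    by (rule integrable_cong_AE_imp[OF integrable_Mclass_shifted_inverse[OF M, of "1 / w"] _ AE_eq])
       (use w sets_Mclass[OF M] in \<open>simp_all cong: measurable_cong_sets\<close>)
  show "(\<integral>u. w / (1 + w * u) \<partial>M) = (\<integral>u. 1 / u * w / (w + 1 / u) \<partial>M)"
  proof (rule integral_cong_AE)
    show "AE u in M. w / (1 + w * u) = 1 / u * w / (w + 1 / u)"
      using AE_Mclass_pos[OF M] by eventually_elim (use w in \<open>simp add: field_simps\<close>)
  qed (use sets_Mclass[OF M] in \<open>simp_all cong: measurable_cong_sets\<close>)
qed

lemma supS_le_if_holomorphic_extension:
  fixes M :: "real measure" and \<Phi> :: "complex \<Rightarrow> complex" and a b \<tau> :: real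
  assumes M: "M \<in> Mclass" and \<tau>: "0 < \<tau>" and \<Phi>: "\<Phi> holomorphic_on ball 1 (1 + \<tau>)"
    and \<Phi>_eq: "\<And>w. 0 < w \<Longrightarrow> w < 2 \<Longrightarrow> \<Phi> (of_real w) = of_real (a + b * w + (\<integral>u. w / (1 + w * u) \<partial>M))"
  shows "supS M \<le> ereal (1 / \<tau>)"
  unfolding supS_def
proof (rule Sup_least, clarify)
  fix x
  assume x: "x \<in> supp M"
  show "ereal x \<le> ereal (1 / \<tau>)"
  proof (rule ccontr)
    assume "\<not> ereal x \<le> ereal (1 / \<tau>)"
    then have "1 / \<tau> < x"
      by simp
    define \<delta> where "\<delta> = (1 / x + \<tau>) / 2"
    have "0 < 1 / \<tau>"
      using \<tau> by simp
    then have "0 < x"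
      using \<open>1 / \<tau> < x\<close> by linarith
    then have \<delta>: "0 < \<delta>" "\<delta> < \<tau>" "1 / \<delta> < x"
      using \<open>1 / \<tau> < x\<close> \<tau> by (auto simp: \<delta>_def field_simps)
    have "AE u in M. 1 + 1 / u \<le> 1 + \<delta> \<longrightarrow> 1 / u * (1 / u) = 0"
    proof (rule AE_weight_zero_if_affine_extension[OF _ _ _ _ _ \<Phi>])
      show "integrable M (\<lambda>u. 1 / u * w / (w + 1 / u))" if "0 < w" for w
        by (rule reciprocal_kernel_Mclass(1)[OF M that])
      show "\<Phi> (of_real w) = of_real (a + b * w + (\<integral>u. 1 / u * w / (w + 1 / u) \<partial>M))" if "0 < w" "w < 2" for w
        using \<Phi>_eq[OF that] reciprocal_kernel_Mclass(2)[OF M that(1)] by simp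
    qed (use sets_Mclass[OF M] AE_Mclass_pos[OF M] \<tau> \<delta> in
          \<open>auto cong: measurable_cong_sets elim!: eventually_mono\<close>)
    then have "AE u in M. u \<notin> {1 / \<delta><..}"
      using AE_Mclass_pos[OF M] by eventually_elim (use \<delta>(1) in \<open>auto simp: field_simps\<close>)
    then have "x \<notin> {1 / \<delta><..}"
      by (rule supp_disjoint_if_AE_not_in[OF sets_Mclass[OF M] open_greaterThan _ x])
    then show False
      using \<delta>(3) by simp
  qed
qed

context
  fixes m :: "real measure" and \<sigma> :: real
  assumes m: "m \<in> Mclass" and infS_m: "infS m = ereal \<sigma>" and \<sigma>: "0 \<le> \<sigma>"
begin

lemma AE_ge_infS_Mclass: "AE u in m. \<sigma> \<le> u"
  using AE_infS_le[OF m] by (simp add: infS_m)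

lemmas Mclass_transform_hypotheses =
  measurable_ident_sets[OF sets_Mclass[OF m]] AE_ge_infS_Mclass integrable_Mclass_inverse[OF m] \<sigma>

lemma holomorphic_Mclass_transform:
  "stieltjes_transform m (\<lambda>u. u) (\<lambda>_. 1) holomorphic_on ball 1 (1 + \<sigma>)"
  using holomorphic_stieltjes_transform[of "\<lambda>u. u" m "\<lambda>_. 1" \<sigma> 1] Mclass_transform_hypotheses
  by simp

lemma Mclass_transform_of_real:
  assumes "- \<sigma> < x" "x < 2 + \<sigma>"
  shows "integrable m (\<lambda>u. 1 / (x + u))"
    and "stieltjes_transform m (\<lambda>u. u) (\<lambda>_. 1) (of_real x) = of_real (\<integral>u. 1 / (x + u) \<partial>m)"
  using stieltjes_transform_of_real[of "\<lambda>u. u" m "\<lambda>_. 1" \<sigma> 1 x] Mclass_transform_hypotheses assms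
  by simp_all

lemma integrable_Mclass_transform:
  assumes "- \<sigma> < x"
  shows "integrable m (\<lambda>u. 1 / (x + u))"
proof (cases "0 < x")
  case True
  then show ?thesis
    by (rule integrable_Mclass_shifted_inverse[OF m])
next
  case False
  then show ?thesis
    using Mclass_transform_of_real(1) assms \<sigma> by simp
qed

lemma Mclass_transform_pos:
  assumes "- \<sigma> < x" and nonzero: "emeasure m (space m) \<noteq> 0"
  shows "0 < (\<integral>u. 1 / (x + u) \<partial>m)"
  using AE_ge_infS_Mclass assms
  by (intro integral_pos_AE[OF integrable_Mclass_transform _ nonzero]) (auto elim!: eventually_mono)

lemma Im_Mclass_transform:
  assumes "z \<in> ball 1 (1 + \<sigma>)" "Im z \<noteq> 0" and nonzero: "emeasure m (space m) \<noteq> 0"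
  shows "Im (stieltjes_transform m (\<lambda>u. u) (\<lambda>_. 1) z) * Im z < 0"
  using integrable_stieltjes_transform[of "\<lambda>u. u" m "\<lambda>_. 1" \<sigma> 1 z] Mclass_transform_hypotheses assms
  by (intro Im_stieltjes_transform_mult_Im_neg) auto

end

text \<open>
  \<open>\<integral> 1 / (1 + x u) m(du)\<close> is the transform of \<open>m\<close> with \<open>\<beta> = \<gamma> = 1 / u\<close>; the bound \<open>u \<le> S\<close>
  on the support makes it holomorphic on the disc of radius \<open>1 + 1 / S\<close> about \<open>1\<close>.\<close>
context
  fixes m :: "real measure" and S :: real
  assumes m: "m \<in> Mclass" and supS_m: "supS m = ereal S" and S: "0 < S"
begin

lemma AE_inverse_ge_inverse_supS: "AE u in m. 1 / S \<le> 1 / u"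
  using AE_le_supS[OF m] AE_Mclass_pos[OF m]
  by eventually_elim (use S in \<open>auto simp: supS_m field_simps\<close>)

lemma AE_inverted_denominator_pos: "- (1 / S) < x \<Longrightarrow> AE u in m. 0 < 1 + x * u"
  using AE_le_supS[OF m] AE_Mclass_pos[OF m]
proof eventually_elim
  case (elim u)
  assume x: "- (1 / S) < x"
  show ?case
  proof (cases "0 \<le> x")
    case False
    have "- (1 / S) * u < x * u"
      using x elim by (intro mult_strict_right_mono) auto
    moreover have "- 1 \<le> - (1 / S) * u"
      using elim S by (simp add: supS_m field_simps)
    ultimately show ?thesis
      by linarith
  qed (use elim in \<open>simp add: add_pos_nonneg\<close>)
qed

lemma integrable_Mclass_inverted: "integrable m (\<lambda>u. 1 / u / (1 + 1 / u))"
proof (rule integrable_Mclass_bounded[OF m])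
  show "AE u in m. \<bar>1 / u / (1 + 1 / u)\<bar> \<le> 1 / (1 + u)"
    using AE_Mclass_pos[OF m] by eventually_elim (simp add: field_simps)
qed measurable

lemma inverse_measurable_Mclass: "(\<lambda>u. 1 / u) \<in> borel_measurable m"
  by (subst measurable_cong_sets[OF sets_Mclass[OF m] refl]) measurable

lemma AE_inverse_nonneg: "AE u in m. 0 \<le> 1 / u"
  using AE_Mclass_pos[OF m] by eventually_elim simp

lemma inverted_centre_pos: "0 < 1 + 1 / S"
  using S by (simp add: add_pos_pos)

lemmas Mclass_inverted_transform_hypotheses =
  inverse_measurable_Mclass AE_inverse_ge_inverse_supS AE_inverse_nonneg integrable_Mclass_inverted
  inverted_centre_pos

lemma holomorphic_Mclass_inverted_transform:
  "stieltjes_transform m (\<lambda>u. 1 / u) (\<lambda>u. 1 / u) holomorphic_on ball 1 (1 + 1 / S)"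
  using holomorphic_stieltjes_transform[of "\<lambda>u. 1 / u" m "\<lambda>u. 1 / u" "1 / S" 1]
    Mclass_inverted_transform_hypotheses AE_Mclass_pos[OF m] S
  by (auto elim!: eventually_mono)

lemma Mclass_inverted_transform_of_real:
  assumes x: "- (1 / S) < x" "x < 2 + 1 / S"
  shows "integrable m (\<lambda>u. 1 / (1 + x * u))"
    and "stieltjes_transform m (\<lambda>u. 1 / u) (\<lambda>u. 1 / u) (of_real x) = of_real (\<integral>u. 1 / (1 + x * u) \<partial>m)"
proof -
  note transform = stieltjes_transform_of_real[of "\<lambda>u. 1 / u" m "\<lambda>u. 1 / u" "1 / S" 1 x]
  have AE_eq: "AE u in m. 1 / u / (x + 1 / u) = 1 / (1 + x * u)"
    using AE_inverted_denominator_pos[OF x(1)] AE_Mclass_pos[OF m]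
    by eventually_elim (simp add: field_simps)
  have "integrable m (\<lambda>u. 1 / u / (x + 1 / u))"
    using transform Mclass_inverted_transform_hypotheses AE_Mclass_pos[OF m] S x
    by (auto elim!: eventually_mono)
  then show "integrable m (\<lambda>u. 1 / (1 + x * u))"
    by (rule integrable_cong_AE_imp) (use AE_eq in \<open>auto simp: sets_Mclass[OF m] cong: measurable_cong_sets\<close>)
  have "(\<integral>u. 1 / u / (x + 1 / u) \<partial>m) = (\<integral>u. 1 / (1 + x * u) \<partial>m)"
    by (rule integral_cong_AE) (use AE_eq in \<open>auto simp: sets_Mclass[OF m] cong: measurable_cong_sets\<close>)
  then show "stieltjes_transform m (\<lambda>u. 1 / u) (\<lambda>u. 1 / u) (of_real x) = of_real (\<integral>u. 1 / (1 + x * u) \<partial>m)"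
    using transform Mclass_inverted_transform_hypotheses AE_Mclass_pos[OF m] S x
    by (auto elim!: eventually_mono)
qed

lemma Mclass_inverted_transform_pos:
  assumes "- (1 / S) < x" "x < 2 + 1 / S" and nonzero: "emeasure m (space m) \<noteq> 0"
  shows "0 < (\<integral>u. 1 / (1 + x * u) \<partial>m)"
  using AE_inverted_denominator_pos[OF assms(1)]
  by (intro integral_pos_AE[OF Mclass_inverted_transform_of_real(1)[OF assms(1,2)] _ nonzero])
     (auto elim!: eventually_mono)

lemma Im_Mclass_inverted_transform:
  assumes "z \<in> ball 1 (1 + 1 / S)" "Im z \<noteq> 0" and nonzero: "emeasure m (space m) \<noteq> 0"
  shows "Im (stieltjes_transform m (\<lambda>u. 1 / u) (\<lambda>u. 1 / u) z) * Im z < 0"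
  using integrable_stieltjes_transform[of "\<lambda>u. 1 / u" m "\<lambda>u. 1 / u" "1 / S" 1 z]
    Mclass_inverted_transform_hypotheses AE_Mclass_pos[OF m] S assms
  by (intro Im_stieltjes_transform_mult_Im_neg) (auto elim!: eventually_mono)

end

section \<open>The reciprocal representation\<close>

locale reciprocal_stieltjes_pair =
  fixes q r a b :: real and m M :: "real measure"
  assumes q: "q \<ge> 0" and r: "r \<ge> 0"
    and m: "m \<in> Mclass" and m_nonzero: "emeasure m (space m) \<noteq> 0"
    and a: "a \<ge> 0" and b: "b \<ge> 0" and M: "M \<in> Mclass"
    and representation: "\<And>l::real. l > 0 \<Longrightarrow>
       q + r / l + (\<integral>u. 1 / (l + u) \<partial>m) = 1 / (a * l + b + (\<integral>u. l / (l + u) \<partial>M))"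
begin

definition \<sigma> :: real where "\<sigma> = real_of_ereal (infS m)"

lemma infS_m: "infS m = ereal \<sigma>" and \<sigma>_nonneg: "0 \<le> \<sigma>"
proof -
  obtain s where "infS m = ereal s" "0 \<le> s"
    using infS_finite[OF supp_nonempty[OF m m_nonzero]] .
  then show "infS m = ereal \<sigma>" "0 \<le> \<sigma>"
    by (auto simp: \<sigma>_def)
qed

lemmas m_transform_holomorphic = holomorphic_Mclass_transform[OF m infS_m \<sigma>_nonneg]
  and m_transform_of_real = Mclass_transform_of_real[OF m infS_m \<sigma>_nonneg]
  and integrable_m_transform = integrable_Mclass_transform[OF m infS_m \<sigma>_nonneg]
  and m_transform_pos = Mclass_transform_pos[OF m infS_m \<sigma>_nonneg _ m_nonzero]
  and Im_m_transform = Im_Mclass_transform[OF m infS_m \<sigma>_nonneg _ _ m_nonzero]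

lemma denominator_pos: "0 < x \<Longrightarrow> 0 < q + r / x + (\<integral>u. 1 / (x + u) \<partial>m)"
  using m_transform_pos[of x] \<sigma>_nonneg q r by (simp add: add_nonneg_pos)

lemma M_transform_eq:
  "0 < x \<Longrightarrow> a * x + b + (\<integral>u. x / (x + u) \<partial>M) = 1 / (q + r / x + (\<integral>u. 1 / (x + u) \<partial>m))"
  using representation[of x] denominator_pos[of x] by (simp add: field_simps)

lemma M_transform_nonneg: "0 < x \<Longrightarrow> 0 \<le> (\<integral>u. x / (x + u) \<partial>M)"
  using AE_Mclass_pos[OF M] by (intro integral_nonneg_AE) (auto elim!: eventually_mono)

text \<open>The representation gives \<open>a x \<le> 1 / q\<close> and \<open>b \<le> x / r\<close> for all \<open>x > 0\<close>.\<close>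
lemma q_eq_0_if_a_pos: "0 < a \<Longrightarrow> q = 0"
proof (rule ccontr)
  assume "0 < a" "q \<noteq> 0"
  then have "0 < q"
    using q by simp
  define x where "x = 2 / (a * q)"
  have x: "0 < x"
    using \<open>0 < a\<close> \<open>0 < q\<close> by (simp add: x_def)
  have "a * x \<le> a * x + b + (\<integral>u. x / (x + u) \<partial>M)"
    using M_transform_nonneg[OF x] b by simp
  also have "\<dots> = 1 / (q + r / x + (\<integral>u. 1 / (x + u) \<partial>m))"
    by (rule M_transform_eq[OF x])
  also have "\<dots> \<le> 1 / q"
    using m_transform_pos[of x] denominator_pos[OF x] \<open>0 < q\<close> r x \<sigma>_nonneg
    by (intro divide_left_mono) auto
  finally show False
    using \<open>0 < a\<close> \<open>0 < q\<close> by (simp add: x_def field_simps)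
qed

lemma r_eq_0_if_b_pos: "0 < b \<Longrightarrow> r = 0"
proof (rule ccontr)
  assume "0 < b" "r \<noteq> 0"
  then have "0 < r"
    using r by simp
  define x where "x = b * r / 2"
  have x: "0 < x"
    using \<open>0 < b\<close> \<open>0 < r\<close> by (simp add: x_def)
  have "b \<le> a * x + b + (\<integral>u. x / (x + u) \<partial>M)"
    using M_transform_nonneg[OF x] a x by simp
  also have "\<dots> = 1 / (q + r / x + (\<integral>u. 1 / (x + u) \<partial>m))"
    by (rule M_transform_eq[OF x])
  also have "\<dots> \<le> 1 / (r / x)"
    using m_transform_pos[of x] denominator_pos[OF x] \<open>0 < r\<close> q x \<sigma>_nonneg
    by (intro divide_left_mono) auto
  finally show False
    using \<open>0 < b\<close> \<open>0 < r\<close> by (simp add: x_def field_simps)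
qed

lemma infS_M_ge_if_holomorphic_extension:
  assumes "0 < t" "G holomorphic_on ball 1 (1 + t)"
    and "\<And>x. 0 < x \<Longrightarrow> x < 2 \<Longrightarrow> G (of_real x) = of_real (1 / (q + r / x + (\<integral>u. 1 / (x + u) \<partial>m)))"
  shows "ereal t \<le> infS M"
  by (rule infS_ge_if_holomorphic_extension[OF M assms(1,2), where a = a and b = b])
     (simp add: assms(3) M_transform_eq)

lemma infS_m_le_infS_M_if_r_eq_0:
  assumes r0: "r = 0"
  shows "infS m \<le> infS M"
proof (cases "\<sigma> = 0")
  case True
  then show ?thesis
    using infS_nonneg[of M] by (simp add: infS_m zero_ereal_def)
next
  case False
  then have "0 < \<sigma>"
    using \<sigma>_nonneg by simp
  let ?T = "stieltjes_transform m (\<lambda>u. u) (\<lambda>_. 1)"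
  have nonzero: "of_real q + ?T z \<noteq> 0" if z: "z \<in> ball 1 (1 + \<sigma>)" for z
  proof (cases "Im z = 0")
    case False
    then show ?thesis
      using Im_m_transform[OF z False] by (auto simp: complex_eq_iff)
  next
    case True
    then obtain x where x: "z = of_real x" "- \<sigma> < x" "x < 2 + \<sigma>"
      using real_in_ball_1E[OF z] by auto
    then have "of_real q + ?T z = of_real (q + (\<integral>u. 1 / (x + u) \<partial>m))"
      by (simp add: m_transform_of_real)
    moreover have "0 < q + (\<integral>u. 1 / (x + u) \<partial>m)"
      using m_transform_pos[OF x(2)] q by simp
    ultimately show ?thesis
      by (metis of_real_eq_0_iff less_irrefl)
  qed
  have "ereal \<sigma> \<le> infS M"
  proof (rule infS_M_ge_if_holomorphic_extension[OF \<open>0 < \<sigma>\<close>])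
    show "(\<lambda>z. 1 / (of_real q + ?T z)) holomorphic_on ball 1 (1 + \<sigma>)"
      using nonzero by (intro holomorphic_intros m_transform_holomorphic) auto
    show "1 / (of_real q + ?T (of_real x)) = of_real (1 / (q + r / x + (\<integral>u. 1 / (x + u) \<partial>m)))"
      if "0 < x" "x < 2" for x
      using that \<sigma>_nonneg r0 by (simp add: m_transform_of_real)
  qed
  then show ?thesis
    by (simp add: infS_m)
qed

lemma integrable_m_reflected: "s < \<sigma> \<Longrightarrow> integrable m (\<lambda>u. 1 / (u - s))"
  using integrable_m_transform[of "- s"] by simp

lemma m_reflected_pos: "s < \<sigma> \<Longrightarrow> 0 < (\<integral>u. 1 / (u - s) \<partial>m)"
  using m_transform_pos[of "- s"] by simp

lemma s_minus_le_infS_m: "s_minus q r m \<le> infS m"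
  unfolding s_minus_def by (rule Sup_least) auto

lemma ereal_le_s_minus: "s < \<sigma> \<Longrightarrow> s * (q + (\<integral>u. 1 / (u - s) \<partial>m)) < r \<Longrightarrow> ereal s \<le> s_minus q r m"
  unfolding s_minus_def by (rule Sup_upper) (simp add: infS_m)

lemma s_minus_nonneg: "0 \<le> s_minus q r m"
proof (rule dense_le_bounded[of "ereal (- 1)"])
  fix w :: ereal
  assume w: "ereal (- 1) < w" "w < 0"
  then obtain s where s: "w = ereal s" "- 1 < s" "s < 0"
    by (cases w) auto
  then have "s * (q + (\<integral>u. 1 / (u - s) \<partial>m)) < 0"
    using m_reflected_pos[of s] \<sigma>_nonneg q by (intro mult_neg_pos) auto
  then show "w \<le> s_minus q r m"
    unfolding s(1) using s \<sigma>_nonneg r by (intro ereal_le_s_minus) auto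
qed simp

lemma s_minus_nonpos_if_r_eq_0:
  assumes "r = 0"
  shows "s_minus q r m \<le> 0"
  unfolding s_minus_def
proof (rule Sup_least, clarify)
  fix s
  assume s: "ereal s < infS m" "s * (q + (\<integral>u. 1 / (u - s) \<partial>m)) < r"
  show "ereal s \<le> 0"
  proof (rule ccontr)
    assume "\<not> ereal s \<le> 0"
    then have "0 < s * (q + (\<integral>u. 1 / (u - s) \<partial>m))"
      using m_reflected_pos[of s] s(1) q by (simp add: infS_m add_nonneg_pos)
    then show False
      using s(2) assms by simp
  qed
qed

text \<open>The map \<open>s \<mapsto> s (q + \<integral> 1 / (u - s) m(du))\<close> is increasing on \<open>[0, \<sigma>)\<close>.\<close>
lemma less_r_if_less_s_minus:
  assumes s: "0 \<le> s" "ereal s < s_minus q r m"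
  shows "s * (q + (\<integral>u. 1 / (u - s) \<partial>m)) < r"
proof -
  obtain s' where s': "ereal s' < infS m" "s' * (q + (\<integral>u. 1 / (u - s') \<partial>m)) < r" "s < s'"
    using s(2) by (auto simp: s_minus_def less_Sup_iff)
  have "s' < \<sigma>"
    using s'(1) by (simp add: infS_m)
  have "(\<integral>u. 1 / (u - s) \<partial>m) \<le> (\<integral>u. 1 / (u - s') \<partial>m)"
    using AE_ge_infS_Mclass[OF m infS_m \<sigma>_nonneg] \<open>s' < \<sigma>\<close> s'(3)
    by (intro integral_mono_AE integrable_m_reflected)
       (auto elim!: eventually_mono intro!: divide_left_mono)
  then have "s * (q + (\<integral>u. 1 / (u - s) \<partial>m)) \<le> s' * (q + (\<integral>u. 1 / (u - s') \<partial>m))"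
    using s(1) s'(3) m_reflected_pos[of s] m_reflected_pos[OF \<open>s' < \<sigma>\<close>] \<open>s' < \<sigma>\<close> q
    by (intro mult_mono) auto
  then show ?thesis
    using s'(2) by simp
qed

lemma lower_denominator_pos:
  assumes r: "0 < r" and x: "ereal (- x) < s_minus q r m"
  shows "0 < r + x * (q + (\<integral>u. 1 / (x + u) \<partial>m))"
proof (cases "0 \<le> x")
  case True
  have "0 \<le> x * (q + (\<integral>u. 1 / (x + u) \<partial>m))"
  proof (cases "x = 0")
    case False
    then show ?thesis
      using True m_transform_pos[of x] \<sigma>_nonneg q by simp
  qed simp
  then show ?thesis
    using r by linarith
next
  case False
  then show ?thesis
    using less_r_if_less_s_minus[of "- x"] x by (simp add: add.commute)
qed

lemma lower_denominator_nonzero: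
  assumes r: "0 < r" and t: "ereal t \<le> s_minus q r m" and z: "z \<in> ball 1 (1 + t)"
  shows "of_real r + z * (of_real q + stieltjes_transform m (\<lambda>u. u) (\<lambda>_. 1) z) \<noteq> 0"
proof -
  have "t \<le> \<sigma>"
    using order_trans[OF t s_minus_le_infS_m] by (simp add: infS_m)
  show ?thesis
  proof (cases "Im z = 0")
    case False
    have "z \<in> ball 1 (1 + \<sigma>)"
      using z \<open>t \<le> \<sigma>\<close> by auto
    then show ?thesis
      using Im_m_transform False q r by (intro affine_nonzero_if_Im_mult_Im_neg) auto
  next
    case True
    then obtain x where x: "z = of_real x" "- t < x" "x < 1 + (1 + t)"
      using real_in_ball_1E[OF z] by auto
    have "ereal (- x) < ereal t"
      using x by simp
    then have "0 < r + x * (q + (\<integral>u. 1 / (x + u) \<partial>m))"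
      by (rule lower_denominator_pos[OF r order_less_le_trans[OF _ t]])
    moreover have "of_real r + z * (of_real q + stieltjes_transform m (\<lambda>u. u) (\<lambda>_. 1) z) =
        of_real (r + x * (q + (\<integral>u. 1 / (x + u) \<partial>m)))"
      using x \<open>t \<le> \<sigma>\<close> by (simp add: m_transform_of_real)
    ultimately show ?thesis
      by (metis of_real_eq_0_iff less_irrefl)
  qed
qed

lemma s_minus_le_infS_M: "s_minus q r m \<le> infS M"
proof (cases "s_minus q r m \<le> 0")
  case True
  then show ?thesis
    using infS_nonneg[of M] by (rule order_trans)
next
  case False
  then have "0 < r"
    using s_minus_nonpos_if_r_eq_0 r by (cases "r = 0") auto
  obtain t where t: "s_minus q r m = ereal t" "0 < t"
    using False s_minus_le_infS_m by (cases "s_minus q r m") (auto simp: infS_m)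
  let ?T = "stieltjes_transform m (\<lambda>u. u) (\<lambda>_. 1)"
  have "t \<le> \<sigma>"
    using t s_minus_le_infS_m by (simp add: infS_m)
  have "ereal t \<le> infS M"
  proof (rule infS_M_ge_if_holomorphic_extension[OF t(2)])
    show "(\<lambda>z. z / (of_real r + z * (of_real q + ?T z))) holomorphic_on ball 1 (1 + t)"
      using lower_denominator_nonzero[OF \<open>0 < r\<close>] t \<open>t \<le> \<sigma>\<close>
      by (intro holomorphic_intros holomorphic_on_subset[OF m_transform_holomorphic]) auto
    show "of_real x / (of_real r + of_real x * (of_real q + ?T (of_real x))) =
        of_real (1 / (q + r / x + (\<integral>u. 1 / (x + u) \<partial>m)))" if "0 < x" "x < 2" for x
      using that \<sigma>_nonneg by (simp add: m_transform_of_real field_simps)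
  qed
  then show ?thesis
    using t by simp
qed

lemma finite_mass_m:
  assumes "mbar0 m \<noteq> \<infinity>"
  obtains \<mu>0 where "finite_measure m" "mbar0 m = ereal \<mu>0" "measure m (space m) = \<mu>0" "0 < \<mu>0"
proof -
  have finite: "emeasure m (space m) \<noteq> \<infinity>"
    using assms by (auto simp: mbar0_def)
  then obtain \<mu>0 where \<mu>0: "emeasure m (space m) = ennreal \<mu>0" "0 \<le> \<mu>0"
    by (cases "emeasure m (space m)") auto
  moreover have "\<mu>0 \<noteq> 0"
    using \<mu>0 m_nonzero by auto
  ultimately show ?thesis
    using that[OF finite_measureI[OF finite]] by (simp add: mbar0_def measure_def)
qed

lemma integral_reflected_le_mass:
  assumes "finite_measure m" "measure m (space m) = \<mu>0" "s < \<sigma>"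
  shows "(\<integral>u. 1 / (u - s) \<partial>m) \<le> \<mu>0 / (\<sigma> - s)"
proof -
  have "(\<integral>u. 1 / (u - s) \<partial>m) \<le> (\<integral>u. 1 / (\<sigma> - s) \<partial>m)"
    using AE_ge_infS_Mclass[OF m infS_m \<sigma>_nonneg] assms(3)
    by (intro integral_mono_AE integrable_m_reflected finite_measure.integrable_const[OF assms(1)])
       (auto elim!: eventually_mono intro!: divide_left_mono)
  then show ?thesis
    using assms(2) by simp
qed

lemma s_minus_lower_bound: "ereal r / (ereal r + mbar0 m + ereal q * infS m) * infS m \<le> s_minus q r m"
proof (cases "r = 0 \<or> mbar0 m = \<infinity> \<or> \<sigma> = 0")
  case True
  then have "ereal r / (ereal r + mbar0 m + ereal q * infS m) * infS m = 0"
    by (auto simp: infS_m divide_ereal_def)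
  then show ?thesis
    using s_minus_nonneg by simp
next
  case False
  then have "0 < r" "0 < \<sigma>"
    using r \<sigma>_nonneg by auto
  obtain \<mu>0 where \<mu>0: "finite_measure m" "mbar0 m = ereal \<mu>0" "measure m (space m) = \<mu>0" "0 < \<mu>0"
    using finite_mass_m False by blast
  define D where "D = r + \<mu>0 + q * \<sigma>"
  have "r < D" "0 \<le> q * \<sigma>"
    using \<mu>0(4) q \<sigma>_nonneg by (auto simp: D_def add_pos_nonneg)
  define t where "t = r / D * \<sigma>"
  have t: "0 < t" "t < \<sigma>"
    using \<open>0 < r\<close> \<open>r < D\<close> \<open>0 < \<sigma>\<close> by (auto simp: t_def field_simps)
  have "ereal r / (ereal r + mbar0 m + ereal q * infS m) * infS m = ereal t"
    using \<open>r < D\<close> \<open>0 < r\<close> by (simp add: \<mu>0 infS_m t_def D_def)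
  moreover have "ereal t \<le> s_minus q r m"
  proof (rule dense_le_bounded[of 0])
    fix w
    assume w: "0 < w" "w < ereal t"
    then obtain s where s: "w = ereal s" "0 < s" "s < t"
      by (cases w) auto
    then have "s < \<sigma>"
      using t by simp
    have "s * (q + (\<integral>u. 1 / (u - s) \<partial>m)) \<le> s * (q + \<mu>0 / (\<sigma> - s))"
      using s integral_reflected_le_mass[OF \<mu>0(1,3) \<open>s < \<sigma>\<close>] by (intro mult_left_mono) auto
    also have "\<dots> < r"
    proof -
      have "s * D < r * \<sigma>"
        using s \<open>r < D\<close> \<open>0 < r\<close> by (simp add: t_def field_simps)
      moreover have "s * q * (\<sigma> - s) \<le> s * q * \<sigma>"
        using s q by (simp add: algebra_simps)
      ultimately have "s * q * (\<sigma> - s) + s * \<mu>0 < r * (\<sigma> - s)"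
        by (simp add: D_def algebra_simps)
      then show ?thesis
        using \<open>s < \<sigma>\<close> by (simp add: field_simps)
    qed
    finally show "w \<le> s_minus q r m"
      unfolding s(1) using \<open>s < \<sigma>\<close> by (rule ereal_le_s_minus[rotated])
  qed (use t in simp)
  ultimately show ?thesis
    by simp
qed

lemma supS_m_finite:
  assumes "supS m \<noteq> \<infinity>"
  obtains S where "supS m = ereal S" "0 < S"
proof -
  have "0 < supS m"
    by (rule supS_pos[OF supp_nonempty[OF m m_nonzero]])
  then show ?thesis
    using assms that by (cases "supS m") auto
qed

lemma reciprocal_representation:
  assumes w: "0 < w"
  shows "a + b * w + (\<integral>u. w / (1 + w * u) \<partial>M) = w / (q + r * w + w * (\<integral>u. 1 / (1 + w * u) \<partial>m))"
proof -
  have M_eq: "(\<integral>u. w / (1 + w * u) \<partial>M) = w * (\<integral>u. (1 / w) / (1 / w + u) \<partial>M)"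
  proof -
    have "(\<integral>u. w / (1 + w * u) \<partial>M) = (\<integral>u. w * ((1 / w) / (1 / w + u)) \<partial>M)"
      using AE_Mclass_pos[OF M] w
      by (intro integral_cong_AE) (auto simp: sets_Mclass[OF M] field_simps cong: measurable_cong_sets elim!: eventually_mono)
    then show ?thesis
      by (simp only: integral_mult_right_zero)
  qed
  have m_eq: "w * (\<integral>u. 1 / (1 + w * u) \<partial>m) = (\<integral>u. 1 / (1 / w + u) \<partial>m)"
  proof -
    have "(\<integral>u. 1 / (1 / w + u) \<partial>m) = (\<integral>u. w * (1 / (1 + w * u)) \<partial>m)"
      using AE_Mclass_pos[OF m] w
      by (intro integral_cong_AE) (auto simp: sets_Mclass[OF m] field_simps cong: measurable_cong_sets elim!: eventually_mono)
    then show ?thesis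
      by (simp only: integral_mult_right_zero)
  qed
  have "a + b * w + (\<integral>u. w / (1 + w * u) \<partial>M) = w * (a * (1 / w) + b + (\<integral>u. (1 / w) / (1 / w + u) \<partial>M))"
    unfolding M_eq using w by (simp add: field_simps)
  also have "\<dots> = w / (q + r / (1 / w) + (\<integral>u. 1 / (1 / w + u) \<partial>m))"
    using M_transform_eq[of "1 / w"] w by simp
  also have "\<dots> = w / (q + r * w + w * (\<integral>u. 1 / (1 + w * u) \<partial>m))"
    by (simp add: m_eq)
  finally show ?thesis .
qed

lemma supS_M_le_if_holomorphic_extension:
  assumes "0 < \<tau>" "\<Phi> holomorphic_on ball 1 (1 + \<tau>)"
    and "\<And>w. 0 < w \<Longrightarrow> w < 2 \<Longrightarrow>
           \<Phi> (of_real w) = of_real (w / (q + r * w + w * (\<integral>u. 1 / (1 + w * u) \<partial>m)))"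
  shows "supS M \<le> ereal (1 / \<tau>)"
  by (rule supS_le_if_holomorphic_extension[OF M assms(1,2), where a = a and b = b])
     (simp add: assms(3) reciprocal_representation)

lemma supS_M_le_supS_m_if_q_eq_0:
  assumes q0: "q = 0"
  shows "supS M \<le> supS m"
proof (cases "supS m = \<infinity>")
  case False
  then obtain S where S: "supS m = ereal S" "0 < S"
    by (rule supS_m_finite)
  let ?L = "stieltjes_transform m (\<lambda>u. 1 / u) (\<lambda>u. 1 / u)"
  have nonzero: "of_real r + ?L z \<noteq> 0" if z: "z \<in> ball 1 (1 + 1 / S)" for z
  proof (cases "Im z = 0")
    case False
    then show ?thesis
      using Im_Mclass_inverted_transform[OF m S z False m_nonzero] by (auto simp: complex_eq_iff)
  next
    case True
    then obtain x where x: "z = of_real x" "- (1 / S) < x" "x < 2 + 1 / S"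
      using real_in_ball_1E[OF z] by auto
    then have "of_real r + ?L z = of_real (r + (\<integral>u. 1 / (1 + x * u) \<partial>m))"
      by (simp add: Mclass_inverted_transform_of_real[OF m S])
    moreover have "0 < r + (\<integral>u. 1 / (1 + x * u) \<partial>m)"
      using Mclass_inverted_transform_pos[OF m S x(2,3) m_nonzero] r by simp
    ultimately show ?thesis
      by (metis of_real_eq_0_iff less_irrefl)
  qed
  have "supS M \<le> ereal (1 / (1 / S))"
  proof (rule supS_M_le_if_holomorphic_extension)
    show "(\<lambda>z. 1 / (of_real r + ?L z)) holomorphic_on ball 1 (1 + 1 / S)"
      using nonzero by (intro holomorphic_intros holomorphic_Mclass_inverted_transform[OF m S]) auto
    show "1 / (of_real r + ?L (of_real w)) =
        of_real (w / (q + r * w + w * (\<integral>u. 1 / (1 + w * u) \<partial>m)))" if "0 < w" "w < 2" for w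
    proof -
      have "0 < 1 / S"
        using S by simp
      have w: "- (1 / S) < w" "w < 2 + 1 / S"
        using \<open>0 < 1 / S\<close> that by linarith+
      have "q + r * w + w * (\<integral>u. 1 / (1 + w * u) \<partial>m) = w * (r + (\<integral>u. 1 / (1 + w * u) \<partial>m))"
        using q0 by (simp add: algebra_simps)
      then have "w / (q + r * w + w * (\<integral>u. 1 / (1 + w * u) \<partial>m)) = 1 / (r + (\<integral>u. 1 / (1 + w * u) \<partial>m))"
        using that by simp
      then show ?thesis
        by (simp add: Mclass_inverted_transform_of_real(2)[OF m S w])
    qed
  qed (use S in simp)
  then show ?thesis
    using S by simp
qed simp

lemma s_plus_eq_infinity_if_q_eq_0:
  assumes q0: "q = 0"
  shows "s_plus q r m = \<infinity>"
proof -
  have empty: "{s. supS m < ereal s \<and> s * (q - (\<integral>u. 1 / (s - u) \<partial>m)) > r} = {}"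
  proof (intro equals0I, clarify)
    fix s
    assume s: "supS m < ereal s" "s * (q - (\<integral>u. 1 / (s - u) \<partial>m)) > r"
    have "0 < s"
      using supS_pos[OF supp_nonempty[OF m m_nonzero]] s(1) by (metis ereal_less(2) less_trans)
    moreover have "AE u in m. 0 \<le> 1 / (s - u)"
      using AE_le_supS[OF m]
    proof eventually_elim
      case (elim u)
      then have "ereal u < ereal s"
        using s(1) by (rule le_less_trans)
      then show ?case
        by simp
    qed
    then have "0 \<le> (\<integral>u. 1 / (s - u) \<partial>m)"
      by (rule integral_nonneg_AE)
    ultimately have "0 \<le> s * (\<integral>u. 1 / (s - u) \<partial>m)"
      by simp
    then show False
      using s(2) q0 r by simp
  qed
  then show ?thesis
    unfolding s_plus_def empty by (simp add: top_ereal_def)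
qed

lemma supS_m_le_s_plus: "supS m \<le> s_plus q r m"
  unfolding s_plus_def by (rule Inf_greatest) auto

lemma s_plus_le_ereal: "supS m < ereal s \<Longrightarrow> r < s * (q - (\<integral>u. 1 / (s - u) \<partial>m)) \<Longrightarrow> s_plus q r m \<le> ereal s"
  unfolding s_plus_def by (rule Inf_lower) simp

lemma integrable_m_reflected_above:
  assumes S: "supS m = ereal S" and s: "S < s"
  shows "integrable m (\<lambda>u. 1 / (s - u))"
proof (rule integrable_Mclass_bounded[OF m])
  show "AE u in m. \<bar>1 / (s - u)\<bar> \<le> (1 + S) / (s - S) / (1 + u)"
    using AE_le_supS[OF m] AE_Mclass_pos[OF m]
  proof eventually_elim
    case (elim u)
    then have "u \<le> S"
      by (simp add: S)
    have "1 / (s - u) \<le> 1 / (s - S)"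
      using \<open>u \<le> S\<close> s by (intro divide_left_mono) auto
    also have "\<dots> \<le> 1 / (s - S) * ((1 + S) / (1 + u))"
      using mult_left_mono[of 1 "(1 + S) / (1 + u)" "1 / (s - S)"] \<open>u \<le> S\<close> elim s by simp
    finally show ?case
      using \<open>u \<le> S\<close> s by simp
  qed
qed measurable

lemma AE_le_supS_m: "supS m = ereal S \<Longrightarrow> AE u in m. u \<le> S"
  using AE_le_supS[OF m] by simp

text \<open>The map \<open>s \<mapsto> s (q - \<integral> 1 / (s - u) m(du))\<close> is increasing where it is positive.\<close>
lemma greater_r_if_greater_s_plus:
  assumes s: "s_plus q r m < ereal s"
  shows "r < s * (q - (\<integral>u. 1 / (s - u) \<partial>m))"
proof -
  obtain s' where s': "supS m < ereal s'" "r < s' * (q - (\<integral>u. 1 / (s' - u) \<partial>m))" "s' < s"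
    using s by (auto simp: s_plus_def Inf_less_iff)
  then obtain S where S: "supS m = ereal S" "0 < S"
    using supS_m_finite by (cases "supS m") auto
  have "S < s'"
    using s'(1) S by simp
  have "(\<integral>u. 1 / (s - u) \<partial>m) \<le> (\<integral>u. 1 / (s' - u) \<partial>m)"
    using AE_le_supS_m[OF S(1)] \<open>S < s'\<close> s'(3)
    by (intro integral_mono_AE integrable_m_reflected_above[OF S(1)])
       (auto elim!: eventually_mono intro!: divide_left_mono)
  moreover have "0 < q - (\<integral>u. 1 / (s' - u) \<partial>m)"
  proof -
    have "0 < s' * (q - (\<integral>u. 1 / (s' - u) \<partial>m))"
      using s'(2) r by linarith
    then show ?thesis
      using S \<open>S < s'\<close> by (simp add: zero_less_mult_iff)
  qed
  ultimately have "s' * (q - (\<integral>u. 1 / (s' - u) \<partial>m)) \<le> s * (q - (\<integral>u. 1 / (s - u) \<partial>m))"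
    using S \<open>S < s'\<close> s'(3) by (intro mult_mono) auto
  then show ?thesis
    using s'(2) by simp
qed

lemma s_plus_finite:
  assumes "s_plus q r m = ereal T"
  obtains S where "supS m = ereal S" "0 < S" "S \<le> T"
proof -
  have "supS m \<le> ereal T"
    using supS_m_le_s_plus assms by simp
  then obtain S where "supS m = ereal S" "0 < S"
    using supS_m_finite by (cases "supS m") auto
  then show ?thesis
    using that \<open>supS m \<le> ereal T\<close> by simp
qed

lemma upper_denominator_pos:
  assumes q: "0 < q" and T: "s_plus q r m = ereal T" and x: "- (1 / T) < x"
  shows "0 < q + x * (r + (\<integral>u. 1 / (1 + x * u) \<partial>m))"
proof -
  obtain S where S: "supS m = ereal S" "0 < S" "S \<le> T"
    using T by (rule s_plus_finite)
  show ?thesis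
  proof (cases "0 \<le> x")
    case True
    have "0 \<le> (\<integral>u. 1 / (1 + x * u) \<partial>m)"
      using AE_Mclass_pos[OF m] True by (intro integral_nonneg_AE) (auto elim!: eventually_mono)
    then show ?thesis
      using q r True by (intro add_pos_nonneg mult_nonneg_nonneg) auto
  next
    case False
    define s where "s = - 1 / x"
    have s: "T < s" "0 < s"
      using False x S by (auto simp: s_def field_simps)
    have "x * (\<integral>u. 1 / (1 + x * u) \<partial>m) = (\<integral>u. x * (1 / (1 + x * u)) \<partial>m)"
      by (rule integral_mult_right_zero[symmetric])
    also have "\<dots> = (\<integral>u. - (1 / (s - u)) \<partial>m)"
    proof (rule integral_cong_AE)
      show "AE u in m. x * (1 / (1 + x * u)) = - (1 / (s - u))"
        using AE_le_supS_m[OF S(1)]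
      proof eventually_elim
        case (elim u)
        then have "u < s"
          using s S by simp
        have eq: "1 + x * u = - x * (s - u)"
          using False by (simp add: s_def algebra_simps)
        show ?case
          unfolding eq using \<open>u < s\<close> False by (simp add: field_simps)
      qed
    qed (use sets_Mclass[OF m] in \<open>simp_all cong: measurable_cong_sets\<close>)
    finally have "q + x * (r + (\<integral>u. 1 / (1 + x * u) \<partial>m)) = (s * (q - (\<integral>u. 1 / (s - u) \<partial>m)) - r) / s"
      using s by (simp add: s_def field_simps)
    moreover have "r < s * (q - (\<integral>u. 1 / (s - u) \<partial>m))"
      using greater_r_if_greater_s_plus s T by simp
    ultimately show ?thesis
      using s by simp
  qed
qed

lemma upper_denominator_nonzero:
  assumes q: "0 < q" and T: "s_plus q r m = ereal T" and z: "z \<in> ball 1 (1 + 1 / T)"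
  shows "of_real q + z * (of_real r + stieltjes_transform m (\<lambda>u. 1 / u) (\<lambda>u. 1 / u) z) \<noteq> 0"
proof -
  obtain S where S: "supS m = ereal S" "0 < S" "S \<le> T"
    using T by (rule s_plus_finite)
  then have "1 / T \<le> 1 / S"
    by (simp add: frac_le)
  show ?thesis
  proof (cases "Im z = 0")
    case False
    have "z \<in> ball 1 (1 + 1 / S)"
      using z \<open>1 / T \<le> 1 / S\<close> by auto
    then show ?thesis
      using Im_Mclass_inverted_transform[OF m S(1,2)] False q r m_nonzero
      by (intro affine_nonzero_if_Im_mult_Im_neg) auto
  next
    case True
    then obtain x where x: "z = of_real x" "- (1 / T) < x" "x < 1 + (1 + 1 / T)"
      using real_in_ball_1E[OF z] by auto
    then have "- (1 / S) < x" "x < 2 + 1 / S"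
      using \<open>1 / T \<le> 1 / S\<close> by auto
    then have "of_real q + z * (of_real r + stieltjes_transform m (\<lambda>u. 1 / u) (\<lambda>u. 1 / u) z) =
        of_real (q + x * (r + (\<integral>u. 1 / (1 + x * u) \<partial>m)))"
      using x(1) by (simp add: Mclass_inverted_transform_of_real[OF m S(1,2)])
    then show ?thesis
      using upper_denominator_pos[OF q T x(2)] by (metis of_real_eq_0_iff less_irrefl)
  qed
qed

lemma supS_M_le_s_plus: "supS M \<le> s_plus q r m"
proof (cases "s_plus q r m = \<infinity>")
  case False
  then have "0 < q"
    using s_plus_eq_infinity_if_q_eq_0 q by (cases "q = 0") auto
  obtain T where T: "s_plus q r m = ereal T"
    using False supS_m_le_s_plus supS_pos[OF supp_nonempty[OF m m_nonzero]]
    by (cases "s_plus q r m") auto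
  obtain S where S: "supS m = ereal S" "0 < S" "S \<le> T"
    using T by (rule s_plus_finite)
  let ?L = "stieltjes_transform m (\<lambda>u. 1 / u) (\<lambda>u. 1 / u)"
  have "supS M \<le> ereal (1 / (1 / T))"
  proof (rule supS_M_le_if_holomorphic_extension)
    show "0 < 1 / T"
      using S by simp
    have "1 / T \<le> 1 / S"
      using S by (simp add: frac_le)
    then show "(\<lambda>z. z / (of_real q + z * (of_real r + ?L z))) holomorphic_on ball 1 (1 + 1 / T)"
      using upper_denominator_nonzero[OF \<open>0 < q\<close> T]
      by (intro holomorphic_intros holomorphic_on_subset[OF holomorphic_Mclass_inverted_transform[OF m S(1,2)]])
         auto
    show "of_real w / (of_real q + of_real w * (of_real r + ?L (of_real w))) =
        of_real (w / (q + r * w + w * (\<integral>u. 1 / (1 + w * u) \<partial>m)))" if "0 < w" "w < 2" for w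
    proof -
      have "0 < 1 / S"
        using S by simp
      then have "- (1 / S) < w" "w < 2 + 1 / S"
        using that by linarith+
      then show ?thesis
        by (simp add: Mclass_inverted_transform_of_real[OF m S(1,2)] algebra_simps)
    qed
  qed
  then show ?thesis
    using T by simp
qed simp

lemma integral_reflected_above_le_mass:
  assumes "finite_measure m" "measure m (space m) = \<mu>0" "supS m = ereal S" "S < s"
  shows "(\<integral>u. 1 / (s - u) \<partial>m) \<le> \<mu>0 / (s - S)"
proof -
  have "(\<integral>u. 1 / (s - u) \<partial>m) \<le> (\<integral>u. 1 / (s - S) \<partial>m)"
    using AE_le_supS_m[OF assms(3)] assms(4)
    by (intro integral_mono_AE integrable_m_reflected_above[OF assms(3)]
        finite_measure.integrable_const[OF assms(1)])
       (auto elim!: eventually_mono intro!: divide_left_mono)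
  then show ?thesis
    using assms(2) by simp
qed

lemma s_plus_upper_bound:
  assumes "0 < q"
  shows "s_plus q r m \<le> supS m + (ereal r + mbar0 m) / ereal q"
proof (cases "supS m = \<infinity> \<or> mbar0 m = \<infinity>")
  case True
  have "supS m \<noteq> - \<infinity>"
    using supS_pos[OF supp_nonempty[OF m m_nonzero]] by auto
  moreover have "0 \<le> (ereal r + mbar0 m) / ereal q"
    using r assms by (auto simp: mbar0_def intro!: divide_nonneg_nonneg)
  ultimately have infinite: "supS m + (ereal r + mbar0 m) / ereal q = \<infinity>"
    using True assms by (cases "supS m") auto
  show ?thesis
    unfolding infinite by simp
next
  case False
  obtain S where S: "supS m = ereal S" "0 < S"
    using False supS_m_finite by blast
  obtain \<mu>0 where \<mu>0: "finite_measure m" "mbar0 m = ereal \<mu>0" "measure m (space m) = \<mu>0" "0 < \<mu>0"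
    using finite_mass_m False by blast
  define B where "B = S + (r + \<mu>0) / q"
  have "s_plus q r m \<le> ereal B"
  proof (rule dense_ge_bounded[of "ereal B" "ereal (B + 1)"])
    fix w
    assume w: "ereal B < w" "w < ereal (B + 1)"
    then obtain s where s: "w = ereal s" "B < s"
      by (cases w) auto
    define D where "D = s - S"
    have "r + \<mu>0 < q * D"
      using s assms by (simp add: B_def D_def field_simps)
    then have "0 < q * D"
      using r \<mu>0(4) by linarith
    then have "0 < D"
      using assms by (simp add: zero_less_mult_iff)
    then have "S < s" "D \<le> s"
      using S by (auto simp: D_def)
    have K: "(\<integral>u. 1 / (s - u) \<partial>m) \<le> \<mu>0 / D"
      using integral_reflected_above_le_mass[OF \<mu>0(1,3) S(1) \<open>S < s\<close>] by (simp add: D_def)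
    have "r * D < (q * D - \<mu>0) * D"
      using \<open>r + \<mu>0 < q * D\<close> \<open>0 < D\<close> by (intro mult_strict_right_mono) auto
    also have "\<dots> \<le> (q * D - \<mu>0) * s"
      using \<open>r + \<mu>0 < q * D\<close> r \<open>D \<le> s\<close> by (intro mult_left_mono) auto
    finally have "r < s * (q - \<mu>0 / D)"
      using \<open>0 < D\<close> by (simp add: field_simps)
    also have "\<dots> \<le> s * (q - (\<integral>u. 1 / (s - u) \<partial>m))"
      using K \<open>S < s\<close> S by (intro mult_left_mono) auto
    finally show "s_plus q r m \<le> w"
      unfolding s(1) using \<open>S < s\<close> S by (intro s_plus_le_ereal) auto
  qed simp
  then show ?thesis
    using assms by (simp add: S \<mu>0 B_def)
qed

lemma representation_if_M_zero:
  assumes "emeasure M (space M) = 0" and x: "0 < x"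
  shows "q + r / x + (\<integral>u. 1 / (x + u) \<partial>m) = 1 / (a * x + b)"
proof -
  have "AE u in M. False"
    using assms(1) by (simp add: eventually_False ae_filter_eq_bot_iff)
  then have "AE u in M. x / (x + u) = 0"
    by (rule eventually_mono) simp
  then have "(\<integral>u. x / (x + u) \<partial>M) = 0"
    by (rule integral_eq_zero_AE)
  then show ?thesis
    using representation[OF x] by simp
qed

text \<open>If \<open>M\<close> vanished, the representation would make \<open>x \<mapsto> \<integral> x / (x + u) m(du)\<close> constant when
  \<open>b = 0\<close>, and \<open>x \<mapsto> \<integral> 1 / (x + u) m(du)\<close> constant when \<open>a = 0\<close>.\<close>
lemma M_nonzero:
  assumes "(0 < a \<and> b = 0) \<or> (a = 0 \<and> 0 < b)"
  shows "emeasure M (space M) \<noteq> 0"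
proof
  assume "emeasure M (space M) = 0"
  note reduced = representation_if_M_zero[OF this]
  have integrable_1: "integrable m (\<lambda>u. 1 / (1 + u))" and integrable_2: "integrable m (\<lambda>u. 1 / (2 + u))"
    using integrable_m_transform \<sigma>_nonneg by auto
  from assms show False
  proof
    assume ab: "0 < a \<and> b = 0"
    then have "q = 0"
      using q_eq_0_if_a_pos by simp
    have "0 < (\<integral>u. 2 * (1 / (2 + u)) - 1 / (1 + u) \<partial>m)"
      using AE_Mclass_pos[OF m]
      by (intro integral_pos_AE[OF _ _ m_nonzero] Bochner_Integration.integrable_diff
          integrable_mult_right integrable_1 integrable_2)
         (auto simp: field_simps elim!: eventually_mono)
    also have "\<dots> = 2 * (\<integral>u. 1 / (2 + u) \<partial>m) - (\<integral>u. 1 / (1 + u) \<partial>m)"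
      using integrable_1 integrable_2
      by (simp only: Bochner_Integration.integral_diff integrable_mult_right integral_mult_right_zero)
    finally have "(\<integral>u. 1 / (1 + u) \<partial>m) < 2 * (\<integral>u. 1 / (2 + u) \<partial>m)"
      by simp
    moreover have "r + (\<integral>u. 1 / (1 + u) \<partial>m) = 1 / a" "r / 2 + (\<integral>u. 1 / (2 + u) \<partial>m) = 1 / (2 * a)"
      using reduced[of 1] reduced[of 2] ab \<open>q = 0\<close> by simp_all
    moreover have "2 * (1 / (2 * a)) = 1 / a"
      by simp
    ultimately show False
      by linarith
  next
    assume ab: "a = 0 \<and> 0 < b"
    then have "r = 0"
      using r_eq_0_if_b_pos by simp
    have "0 < (\<integral>u. 1 / (1 + u) - 1 / (2 + u) \<partial>m)"
      using AE_Mclass_pos[OF m]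
      by (intro integral_pos_AE[OF _ _ m_nonzero] Bochner_Integration.integrable_diff integrable_1 integrable_2)
         (auto simp: field_simps elim!: eventually_mono)
    also have "\<dots> = (\<integral>u. 1 / (1 + u) \<partial>m) - (\<integral>u. 1 / (2 + u) \<partial>m)"
      using integrable_1 integrable_2 by simp
    finally show False
      using reduced[of 1] reduced[of 2] ab \<open>r = 0\<close> by simp
  qed
qed

lemma infS_M_le_supS_M: "(0 < a \<and> b = 0) \<or> (a = 0 \<and> 0 < b) \<Longrightarrow> infS M \<le> supS M"
  by (rule infS_le_supS[OF supp_nonempty[OF M M_nonzero]])

end

theorem lemma4p2:
  fixes q r a b :: real and m M :: "real measure"
  assumes q: "q \<ge> 0" and r: "r \<ge> 0"
    and m: "m \<in> Mclass" and m_nz: "emeasure m (space m) \<noteq> 0"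
    and a: "a \<ge> 0" and b: "b \<ge> 0" and M: "M \<in> Mclass"
    and rep: "\<And>l::real. l > 0 \<Longrightarrow>
       q + r / l + (\<integral>u. 1 / (l + u) \<partial>m)
         = 1 / (a * l + b + (\<integral>u. l / (l + u) \<partial>M))"
  shows
   "(a = 0 \<and> b = 0 \<longrightarrow>
       ereal r / (ereal r + mbar0 m + ereal q * infS m) * infS m \<le> s_minus q r m
     \<and> s_minus q r m \<le> infS M
     \<and> supS M \<le> s_plus q r m
     \<and> (q > 0 \<longrightarrow> s_plus q r m \<le> supS m + (ereal r + mbar0 m) / ereal q)
     \<and> (q = 0 \<longrightarrow> s_plus q r m = \<infinity>))
  \<and> (a > 0 \<and> b = 0 \<longrightarrow>
       ereal r / (ereal r + mbar0 m) * infS m \<le> s_minus q r m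
     \<and> s_minus q r m \<le> infS M \<and> infS M \<le> supS M \<and> supS M \<le> supS m)
  \<and> (a = 0 \<and> b > 0 \<longrightarrow>
       infS m \<le> infS M \<and> infS M \<le> supS M \<and> supS M \<le> s_plus q r m
     \<and> (q > 0 \<longrightarrow> s_plus q r m \<le> supS m + mbar0 m / ereal q)
     \<and> (q = 0 \<longrightarrow> s_plus q r m = \<infinity>))
  \<and> (a > 0 \<and> b > 0 \<longrightarrow>
       (\<forall>x\<in>supp M. infS m \<le> ereal x \<and> ereal x \<le> supS m))"
proof -
  interpret reciprocal_stieltjes_pair q r a b m M
    using assms by unfold_locales
  have lower_bound_q_0: "ereal r / (ereal r + mbar0 m) * infS m \<le> s_minus q r m" if "q = 0"
    using s_minus_lower_bound that by (simp add: infS_m)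
  have upper_bound_r_0: "s_plus q r m \<le> supS m + mbar0 m / ereal q" if "r = 0" "0 < q"
    using s_plus_upper_bound[OF that(2)] that(1) by (simp add: zero_ereal_def)
  show ?thesis
    using s_minus_lower_bound s_minus_le_infS_M supS_M_le_s_plus s_plus_upper_bound
      s_plus_eq_infinity_if_q_eq_0 infS_m_le_infS_M_if_r_eq_0 supS_M_le_supS_m_if_q_eq_0
      infS_M_le_supS_M q_eq_0_if_a_pos r_eq_0_if_b_pos lower_bound_q_0 upper_bound_r_0
      infS_le_supp[of _ M] supp_le_supS[of _ M]
    by (intro conjI impI ballI) (auto intro: order_trans)
qed

end
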